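(* Let $m\in\mathbb N^+$, let $\mathcal N$ be a set of monomials of degree $m$ in $X$ and $Y$, and let $I=\langle X^m,Y^m,\mathcal N\rangle\subseteq R$. Suppose that $I=\mathfrak a\cdot\mathfrak b$ for some $\mathfrak a,\mathfrak b\in\mathcal I(R)\setminus\{R\}$, and put $d=\operatorname{mdeg}(\mathfrak a)$, $e=\operatorname{mdeg}(\mathfrak b)$, $r=\dim_K\mathfrak a_K[d]$, $s=\dim_K\mathfrak b_K[e]$. Then: (i) $m=d+e$ and $I_K[m]=\mathfrak a_K[d]\cdot\mathfrak b_K[e]$; (ii) $d\ge1$ and $e\ge1$; (iii) $r\ge2$ and $\mathfrak a_K[d]$ has a $K$-basis $\{f_1,\dots,f_r\}$ with $X^d=\operatorname{in}(f_1)>\operatorname{in}(f_2)>\dots>\operatorname{in}(f_r)$; likewise $s\ge 2$ and $\mathfrak b_K[e]$ has a $K$-basis $\{g_1,\dots,g_s\}$ with $X^e=\operatorname{in}(g_1)>\dots>\operatorname{in}(g_s)$; (iv) for every $j\in[2,r]$ there is $a_j\in[1,d]$ with $\operatorname{in}(f_j)=X^{d-a_j}Y^{a_j}$, and for every $k\in[2,s]$ there is $b_k\in[1,e]$ with $\operatorname{in}(g_k)=X^{e-b_k}Y^{b_k}$; (v) setting $a_1=b_1=0$, for every $j\in[1,r]$ and $k\in[1,s]$ we have $X^{m-(a_j+b_k)}Y^{a_j+b_k}\in\{X^m,Y^m\}\cup\mathcal N$.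
   Context: Let $D$ be an integral domain with quotient field $K$, $N\ge 2$, $R=D[X_1,\dots,X_N]$, $S=K[X_1,\dots,X_N]$, and write $X=X_1$, $Y=X_2$. $\mathcal I(R)$ denotes the monoid of nonzero ideals of $R$ under ideal multiplication (identity $R$; its only unit is $R$). Standing assumption: $\mathcal I(R)$ is a BF-monoid (every element is a product of atoms and has finitely many factorization lengths). For $[x,y]$ with integers $x\le y$ we mean $\{z\in\mathbb Z: x\le z\le y\}$. With the standard grading, every $f\in S$ is uniquely $f=\sum_{t\ge0}f_t$ with $f_t$ homogeneous of degree $t$; the min-degree $\operatorname{mdeg}(f)$ of $f\ne0$ is the least $t$ with $f_t\ne0$, and for a nonzero ideal $J$ of $R$, $\operatorname{mdeg}(J)$ is the least min-degree of a nonzero element of $J$. For $J\in\mathcal I(R)$ and $i\in\mathbb N$, $J[i]=\{f_i: f\in J\}$ and $J_K[i]$ is the $K$-linear span of $J[i]$ in $S$; the product $V\cdot W$ of two such spaces is the $K$-span of all products. $\operatorname{in}(f)$ is the largest monomial occurring in $f$ with nonzero coefficient for the lexicographic order with $X_1>X_2>\dots>X_N$. *)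

theory Defs
  imports "HOL-Library.Poly_Mapping"
begin

text \<open>Multivariate polynomials: a monomial in the variables X_1, X_2, ... is an
exponent vector nat =>0 nat (variable X_(i+1) has index i); a polynomial with
coefficients in the field 'k is a finitely supported map from monomials to 'k.
The domain D is a subring of the field 'k whose quotient field is 'k.\<close>

type_synonym 'k mpoly = "(nat \<Rightarrow>\<^sub>0 nat) \<Rightarrow>\<^sub>0 'k"

definition is_subring :: "'k::field set \<Rightarrow> bool" where
  "is_subring D \<longleftrightarrow> 0 \<in> D \<and> 1 \<in> D \<and> (\<forall>a\<in>D. \<forall>b\<in>D. a + b \<in> D \<and> a - b \<in> D \<and> a * b \<in> D)"

definition has_quotient_field :: "'k::field set \<Rightarrow> bool" where
  "has_quotient_field D \<longleftrightarrow> is_subring D \<and> (\<forall>x. \<exists>a\<in>D. \<exists>b\<in>D. b \<noteq> 0 \<and> x = a / b)"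

definition PolyS :: "nat \<Rightarrow> 'k::field mpoly set" where
  "PolyS N = {p :: 'k mpoly. \<forall>\<mu>\<in>Poly_Mapping.keys p. \<forall>v\<in>Poly_Mapping.keys \<mu>. v < N}"

definition PolyR :: "'k::field set \<Rightarrow> nat \<Rightarrow> 'k mpoly set" where
  "PolyR D N = {p \<in> PolyS N. \<forall>\<mu>. Poly_Mapping.lookup p \<mu> \<in> D}"

definition is_ideal :: "'k::field set \<Rightarrow> nat \<Rightarrow> 'k mpoly set \<Rightarrow> bool" where
  "is_ideal D N J \<longleftrightarrow> J \<subseteq> PolyR D N \<and> 0 \<in> J \<and> (\<forall>f\<in>J. \<forall>g\<in>J. f + g \<in> J)
     \<and> (\<forall>r\<in>PolyR D N. \<forall>f\<in>J. r * f \<in> J)"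

definition nz_ideals :: "'k::field set \<Rightarrow> nat \<Rightarrow> 'k mpoly set set" where
  "nz_ideals D N = {J. is_ideal D N J \<and> J \<noteq> {0}}"

definition ideal_gen :: "'k::field set \<Rightarrow> nat \<Rightarrow> 'k mpoly set \<Rightarrow> 'k mpoly set" where
  "ideal_gen D N G = \<Inter>{J. is_ideal D N J \<and> G \<subseteq> J}"

definition ideal_mult :: "'k::field set \<Rightarrow> nat \<Rightarrow> 'k mpoly set \<Rightarrow> 'k mpoly set \<Rightarrow> 'k mpoly set" where
  "ideal_mult D N A B = ideal_gen D N {a * b |a b. a \<in> A \<and> b \<in> B}"

definition ideal_prod_list :: "'k::field set \<Rightarrow> nat \<Rightarrow> 'k mpoly set list \<Rightarrow> 'k mpoly set" where
  "ideal_prod_list D N Js = foldr (ideal_mult D N) Js (PolyR D N)"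

definition ideal_atom :: "'k::field set \<Rightarrow> nat \<Rightarrow> 'k mpoly set \<Rightarrow> bool" where
  "ideal_atom D N J \<longleftrightarrow> J \<in> nz_ideals D N \<and> J \<noteq> PolyR D N \<and>
     (\<forall>A\<in>nz_ideals D N. \<forall>B\<in>nz_ideals D N. J = ideal_mult D N A B \<longrightarrow> A = PolyR D N \<or> B = PolyR D N)"

definition ideals_BF :: "'k::field set \<Rightarrow> nat \<Rightarrow> bool" where
  "ideals_BF D N \<longleftrightarrow> (\<forall>J\<in>nz_ideals D N.
     (\<exists>As. (\<forall>A\<in>set As. ideal_atom D N A) \<and> J = ideal_prod_list D N As) \<and>
     finite {length As |As. (\<forall>A\<in>set As. ideal_atom D N A) \<and> J = ideal_prod_list D N As})"

definition tdeg :: "(nat \<Rightarrow>\<^sub>0 nat) \<Rightarrow> nat" where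
  "tdeg \<mu> = (\<Sum>v\<in>Poly_Mapping.keys \<mu>. Poly_Mapping.lookup \<mu> v)"

definition hcomp :: "nat \<Rightarrow> 'k::field mpoly \<Rightarrow> 'k mpoly" where
  "hcomp t f = (\<Sum>\<mu>\<in>Poly_Mapping.keys f. if tdeg \<mu> = t then Poly_Mapping.single \<mu> (Poly_Mapping.lookup f \<mu>) else 0)"

definition mdeg :: "'k::field mpoly \<Rightarrow> nat" where
  "mdeg f = (LEAST t. hcomp t f \<noteq> 0)"

definition mdeg_ideal :: "'k::field mpoly set \<Rightarrow> nat" where
  "mdeg_ideal J = (LEAST t. \<exists>f\<in>J. f \<noteq> 0 \<and> mdeg f = t)"

definition comp_set :: "'k::field mpoly set \<Rightarrow> nat \<Rightarrow> 'k mpoly set" where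
  "comp_set J i = hcomp i ` J"

definition smul :: "'k::field \<Rightarrow> 'k mpoly \<Rightarrow> 'k mpoly" where
  "smul c f = Poly_Mapping.map (\<lambda>x. c * x) f"

definition spanK :: "'k::field mpoly set \<Rightarrow> 'k mpoly set" where
  "spanK V = {p. \<exists>F c. finite F \<and> F \<subseteq> V \<and> p = (\<Sum>f\<in>F. smul (c f) f)}"

definition compK :: "'k::field mpoly set \<Rightarrow> nat \<Rightarrow> 'k mpoly set" where
  "compK J i = spanK (comp_set J i)"

definition spprod :: "'k::field mpoly set \<Rightarrow> 'k mpoly set \<Rightarrow> 'k mpoly set" where
  "spprod V W = spanK {v * w |v w. v \<in> V \<and> w \<in> W}"

definition lin_indepK :: "'k::field mpoly list \<Rightarrow> bool" where
  "lin_indepK fs \<longleftrightarrow> (\<forall>c. (\<Sum>i<length fs. smul (c i) (fs ! i)) = 0 \<longrightarrow> (\<forall>i<length fs. c i = 0))"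

definition is_basisK :: "'k::field mpoly set \<Rightarrow> 'k mpoly list \<Rightarrow> bool" where
  "is_basisK V fs \<longleftrightarrow> set fs \<subseteq> V \<and> lin_indepK fs \<and> spanK (set fs) = V"

definition dimK :: "'k::field mpoly set \<Rightarrow> nat" where
  "dimK V = (THE n. \<exists>fs. is_basisK V fs \<and> length fs = n)"

definition lex_less :: "(nat \<Rightarrow>\<^sub>0 nat) \<Rightarrow> (nat \<Rightarrow>\<^sub>0 nat) \<Rightarrow> bool" where
  "lex_less \<mu> \<nu> \<longleftrightarrow> (\<exists>i. (\<forall>j<i. Poly_Mapping.lookup \<mu> j = Poly_Mapping.lookup \<nu> j) \<and> Poly_Mapping.lookup \<mu> i < Poly_Mapping.lookup \<nu> i)"

definition init_mon :: "'k::field mpoly \<Rightarrow> (nat \<Rightarrow>\<^sub>0 nat)" where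
  "init_mon f = (THE \<mu>. \<mu> \<in> Poly_Mapping.keys f \<and> (\<forall>\<nu>\<in>Poly_Mapping.keys f. \<nu> \<noteq> \<mu> \<longrightarrow> lex_less \<nu> \<mu>))"

text \<open>The monomial X^a Y^b (X = X_1, Y = X_2) and the polynomial it denotes.\<close>
definition monXY :: "nat \<Rightarrow> nat \<Rightarrow> (nat \<Rightarrow>\<^sub>0 nat)" where
  "monXY a b = Poly_Mapping.single 0 a + Poly_Mapping.single 1 b"

definition mpoly_of_mon :: "(nat \<Rightarrow>\<^sub>0 nat) \<Rightarrow> 'k::field mpoly" where
  "mpoly_of_mon \<mu> = Poly_Mapping.single \<mu> 1"

end

(*
  Write I = <X^m, Y^m, N> = A B, and let A_K[d], B_K[e] be the lowest-degree forms of A and B.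
  The polynomials whose lowest-degree part lies in degree d + e and in A_K[d] B_K[e] form an
  ideal containing A B; as I is generated in degree m, this gives m = d + e and
  I_K[m] = A_K[d] B_K[e]. If d = 0, some element of A has a nonzero constant term, which can be
  cancelled modulo the monomial ideal I; then B is contained in I, so A I = I and I would have
  factorizations A^n I into atoms of unbounded length. Since the product of forms is supported on
  monomials in X and Y of degree m, comparing parts of least (X, Y)-degree shows that A_K[d]
  consists of forms in X and Y. Take a basis of A_K[d] in echelon form for the lexicographic
  order. X^d occurs as an initial monomial, as otherwise X^m would not lie in A_K[d] B_K[e]; and
  not all initial monomials equal X^d, as otherwise A_K[d] = K f with in(f) = X^d, so that f
  would divide Y^m. Finally, initial monomials are additive under multiplication, so
  in(f_j) in(g_k) is a monomial of an element of I_K[m], hence one of the generators.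
*)
theory Submission
  imports Defs "HOL.Vector_Spaces"
begin

section \<open>Polynomials as a vector space over the coefficient field\<close>

lemma smul_eq_single_mult: "smul c f = Poly_Mapping.single 0 c * f"
  unfolding smul_def by (metis mult_map_scale_conv_mult)

lemma lookup_smul [simp]: "Poly_Mapping.lookup (smul c f) \<mu> = c * Poly_Mapping.lookup f \<mu>"
  unfolding smul_def by (simp add: Poly_Mapping.map.rep_eq when_def)

interpretation K: vector_space "smul :: 'k::field \<Rightarrow> 'k mpoly \<Rightarrow> 'k mpoly"
  by unfold_locales
    (simp_all add: smul_eq_single_mult algebra_simps single_add mult_single flip: mult.assoc)

lemma spanK_eq_span: "spanK V = K.span V"
  unfolding spanK_def K.span_explicit by blast

lemma compK_eq_span: "compK J t = K.span (hcomp t ` J)"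
  unfolding compK_def comp_set_def spanK_eq_span ..

lemma spprod_eq_span: "spprod V W = K.span {v * w |v w. v \<in> V \<and> w \<in> W}"
  unfolding spprod_def spanK_eq_span ..

lemma subspace_keys_pred: "K.subspace {f :: 'k::field mpoly. \<forall>\<mu>\<in>Poly_Mapping.keys f. Q \<mu>}"
proof -
  have "Poly_Mapping.keys (smul c f) \<subseteq> Poly_Mapping.keys f" for c and f :: "'k mpoly"
    by (auto simp: in_keys_iff)
  then show ?thesis
    unfolding K.subspace_def using keys_add by fastforce
qed

lemma keys_span_pred:
  assumes "\<And>v \<mu>. v \<in> S \<Longrightarrow> \<mu> \<in> Poly_Mapping.keys v \<Longrightarrow> Q \<mu>" and "f \<in> K.span S"
  shows "\<forall>\<mu>\<in>Poly_Mapping.keys (f :: 'k::field mpoly). Q \<mu>"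
  using K.span_minimal[OF _ subspace_keys_pred, of S Q] assms by blast

lemma module_hom_mult_left: "module_hom smul smul (\<lambda>w. v * (w :: 'k::field mpoly))"
  unfolding module_hom_iff
  by (simp add: K.module_axioms distrib_left smul_eq_single_mult mult.left_commute[of v])

lemma subspace_compK: "K.subspace (compK J t)"
  unfolding compK_eq_span by (rule K.subspace_span)

lemma subspace_spprod: "K.subspace (spprod V W)"
  unfolding spprod_eq_span by (rule K.subspace_span)

lemma mult_mem_span_mult:
  assumes T: "K.subspace T" and gen: "\<And>v w. v \<in> S \<Longrightarrow> w \<in> S' \<Longrightarrow> v * w \<in> T"
    and v: "v \<in> K.span S" and w: "w \<in> K.span S'"
  shows "v * (w :: 'k::field mpoly) \<in> T"
proof -
  have preimage: "K.subspace ((\<lambda>w. u * w) -` T)" for u :: "'k mpoly"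
    by (rule module_hom.subspace_vimage[OF module_hom_mult_left T])
  have "K.span S' \<subseteq> (\<lambda>w. v' * w) -` T" if "v' \<in> S" for v'
    using K.span_minimal[OF _ preimage] gen that by blast
  then have "S \<subseteq> (\<lambda>v. w * v) -` T" using w by (auto simp: mult.commute)
  then have "K.span S \<subseteq> (\<lambda>v. w * v) -` T" by (rule K.span_minimal[OF _ preimage])
  then show ?thesis using v by (auto simp: mult.commute)
qed

section \<open>Restricting a polynomial to a set of monomials\<close>

definition restrict_keys :: "((nat \<Rightarrow>\<^sub>0 nat) \<Rightarrow> bool) \<Rightarrow> 'k::field mpoly \<Rightarrow> 'k mpoly" where
  "restrict_keys P f = Abs_poly_mapping (\<lambda>\<mu>. if P \<mu> then Poly_Mapping.lookup f \<mu> else 0)"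

lemma lookup_restrict_keys:
  "Poly_Mapping.lookup (restrict_keys P f) \<mu> = (if P \<mu> then Poly_Mapping.lookup f \<mu> else 0)"
proof -
  have "{\<mu>. (if P \<mu> then Poly_Mapping.lookup f \<mu> else 0) \<noteq> 0} \<subseteq> Poly_Mapping.keys f"
    by (auto simp: in_keys_iff split: if_splits)
  then have "finite {\<mu>. (if P \<mu> then Poly_Mapping.lookup f \<mu> else 0) \<noteq> 0}"
    by (rule finite_subset) simp
  then show ?thesis unfolding restrict_keys_def by simp
qed

lemma keys_restrict_keys: "Poly_Mapping.keys (restrict_keys P f) = {\<mu> \<in> Poly_Mapping.keys f. P \<mu>}"
  by (auto simp: in_keys_iff lookup_restrict_keys split: if_splits)

lemma restrict_keys_add: "restrict_keys P (f + g) = restrict_keys P f + restrict_keys P g"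
  by (rule poly_mapping_eqI) (simp add: lookup_restrict_keys lookup_add)

lemma restrict_keys_id: "(\<forall>\<mu>\<in>Poly_Mapping.keys f. P \<mu>) \<Longrightarrow> restrict_keys P f = f"
  by (rule poly_mapping_eqI) (auto simp: lookup_restrict_keys in_keys_iff)

lemma restrict_keys_eq_0: "(\<forall>\<mu>\<in>Poly_Mapping.keys f. \<not> P \<mu>) \<Longrightarrow> restrict_keys P f = 0"
  by (rule poly_mapping_eqI) (auto simp: lookup_restrict_keys in_keys_iff)

lemma restrict_keys_split: "f = restrict_keys P f + restrict_keys (\<lambda>\<mu>. \<not> P \<mu>) f"
  by (rule poly_mapping_eqI) (simp add: lookup_restrict_keys lookup_add)

lemma restrict_keys_single:
  "restrict_keys (\<lambda>\<mu>. \<mu> = \<nu>) f = Poly_Mapping.single \<nu> (Poly_Mapping.lookup f \<nu>)"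
  by (rule poly_mapping_eqI) (simp add: lookup_restrict_keys lookup_single when_def)

locale additive_weight =
  fixes wt :: "(nat \<Rightarrow>\<^sub>0 nat) \<Rightarrow> nat"
  assumes wt_add: "wt (\<mu> + \<nu>) = wt \<mu> + wt \<nu>"
begin

lemma keys_mult_weight_ge:
  fixes f g :: "'k::field mpoly"
  assumes "\<forall>\<mu>\<in>Poly_Mapping.keys f. x \<le> wt \<mu>" "\<forall>\<mu>\<in>Poly_Mapping.keys g. y \<le> wt \<mu>"
  shows "\<forall>\<mu>\<in>Poly_Mapping.keys (f * g). x + y \<le> wt \<mu>"
  using keys_mult[of f g] assms by (force simp: wt_add intro: add_mono)

lemma restrict_weight_mult:
  fixes f g :: "'k::field mpoly"
  assumes f: "\<forall>\<mu>\<in>Poly_Mapping.keys f. x \<le> wt \<mu>" and g: "\<forall>\<mu>\<in>Poly_Mapping.keys g. y \<le> wt \<mu>"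
  shows "restrict_keys (\<lambda>\<mu>. wt \<mu> = x + y) (f * g)
    = restrict_keys (\<lambda>\<mu>. wt \<mu> = x) f * restrict_keys (\<lambda>\<mu>. wt \<mu> = y) g"
proof -
  define f1 where "f1 = restrict_keys (\<lambda>\<mu>. wt \<mu> = x) f"
  define f2 where "f2 = restrict_keys (\<lambda>\<mu>. wt \<mu> \<noteq> x) f"
  define g1 where "g1 = restrict_keys (\<lambda>\<mu>. wt \<mu> = y) g"
  define g2 where "g2 = restrict_keys (\<lambda>\<mu>. wt \<mu> \<noteq> y) g"
  have f1: "\<forall>\<mu>\<in>Poly_Mapping.keys f1. x \<le> wt \<mu>" and g1: "\<forall>\<mu>\<in>Poly_Mapping.keys g1. y \<le> wt \<mu>"
    unfolding f1_def g1_def keys_restrict_keys by auto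
  have f2: "\<forall>\<mu>\<in>Poly_Mapping.keys f2. Suc x \<le> wt \<mu>" and g2: "\<forall>\<mu>\<in>Poly_Mapping.keys g2. Suc y \<le> wt \<mu>"
    using f g unfolding f2_def g2_def keys_restrict_keys by force+
  define h where "h = f1 * g2 + f2 * g1 + f2 * g2"
  have "\<forall>\<mu>\<in>Poly_Mapping.keys (f1 * g1). wt \<mu> = x + y"
    using keys_mult[of f1 g1] unfolding f1_def g1_def keys_restrict_keys by (force simp: wt_add)
  then have low: "restrict_keys (\<lambda>\<mu>. wt \<mu> = x + y) (f1 * g1) = f1 * g1"
    by (rule restrict_keys_id)
  have "\<forall>\<mu>\<in>Poly_Mapping.keys h. Suc (x + y) \<le> wt \<mu>"
    using keys_mult_weight_ge[OF f1 g2] keys_mult_weight_ge[OF f2 g1] keys_mult_weight_ge[OF f2 g2]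
      keys_add[of "f1 * g2 + f2 * g1" "f2 * g2"] keys_add[of "f1 * g2" "f2 * g1"]
    unfolding h_def by fastforce
  then have high: "restrict_keys (\<lambda>\<mu>. wt \<mu> = x + y) h = 0"
    by (intro restrict_keys_eq_0) force
  have "f = f1 + f2" "g = g1 + g2"
    unfolding f1_def f2_def g1_def g2_def by (rule restrict_keys_split)+
  then have "f * g = f1 * g1 + h"
    unfolding h_def by (simp add: algebra_simps)
  then have "restrict_keys (\<lambda>\<mu>. wt \<mu> = x + y) (f * g) = f1 * g1"
    by (simp add: restrict_keys_add low high)
  then show ?thesis unfolding f1_def g1_def .
qed

end

section \<open>Initial monomials\<close>

lemma lex_less_iff: "lex_less \<mu> \<nu> \<longleftrightarrow> \<mu> < \<nu>"
  unfolding lex_less_def less_poly_mapping.rep_eq less_fun_def by blast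

lemma init_mon_eq_Max:
  assumes "f \<noteq> 0" shows "init_mon f = Max (Poly_Mapping.keys f)"
  unfolding init_mon_def
proof (rule the_equality)
  have ne: "Poly_Mapping.keys f \<noteq> {}" using assms by simp
  then show "Max (Poly_Mapping.keys f) \<in> Poly_Mapping.keys f \<and>
      (\<forall>\<nu>\<in>Poly_Mapping.keys f. \<nu> \<noteq> Max (Poly_Mapping.keys f) \<longrightarrow> lex_less \<nu> (Max (Poly_Mapping.keys f)))"
    by (auto simp: lex_less_iff order.strict_iff_order)
  fix \<mu> assume "\<mu> \<in> Poly_Mapping.keys f \<and> (\<forall>\<nu>\<in>Poly_Mapping.keys f. \<nu> \<noteq> \<mu> \<longrightarrow> lex_less \<nu> \<mu>)"
  then show "\<mu> = Max (Poly_Mapping.keys f)"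
    using ne by (metis Max_ge Max_in finite_keys leD lex_less_iff)
qed

lemma init_mon_in_keys: "f \<noteq> 0 \<Longrightarrow> init_mon f \<in> Poly_Mapping.keys f"
  by (simp add: init_mon_eq_Max)

lemma keys_le_init_mon: "\<mu> \<in> Poly_Mapping.keys f \<Longrightarrow> \<mu> \<le> init_mon f"
  using init_mon_eq_Max[of f] by fastforce

lemma init_mon_unique:
  "\<mu> \<in> Poly_Mapping.keys f \<Longrightarrow> (\<forall>\<nu>\<in>Poly_Mapping.keys f. \<nu> \<le> \<mu>) \<Longrightarrow> init_mon f = \<mu>"
  by (metis antisym empty_iff init_mon_in_keys keys_le_init_mon keys_zero)

lemma init_mon_mpoly_of_mon: "init_mon (mpoly_of_mon \<mu> :: 'k::field mpoly) = \<mu>"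
  by (rule init_mon_unique) (simp_all add: mpoly_of_mon_def)

lemma mpoly_of_mon_nonzero: "(mpoly_of_mon \<mu> :: 'k::field mpoly) \<noteq> 0"
proof
  assume "mpoly_of_mon \<mu> = (0 :: 'k mpoly)"
  then have "Poly_Mapping.lookup (mpoly_of_mon \<mu> :: 'k mpoly) \<mu> = 0" by simp
  then show False by (simp add: mpoly_of_mon_def)
qed

lemma lookup_init_mon_nonzero: "f \<noteq> 0 \<Longrightarrow> Poly_Mapping.lookup f (init_mon f) \<noteq> 0"
  using init_mon_in_keys by (simp add: in_keys_iff)

lemma lookup_mult_init_mon:
  fixes f g :: "'k::field mpoly"
  shows "Poly_Mapping.lookup (f * g) (init_mon f + init_mon g)
    = Poly_Mapping.lookup f (init_mon f) * Poly_Mapping.lookup g (init_mon g)"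
proof -
  define a b where "a = init_mon f" and "b = init_mon g"
  define f1 f2 where "f1 = restrict_keys (\<lambda>\<mu>. \<mu> = a) f" and "f2 = restrict_keys (\<lambda>\<mu>. \<mu> \<noteq> a) f"
  define g1 g2 where "g1 = restrict_keys (\<lambda>\<mu>. \<mu> = b) g" and "g2 = restrict_keys (\<lambda>\<mu>. \<mu> \<noteq> b) g"
  have f1: "\<forall>\<mu>\<in>Poly_Mapping.keys f1. \<mu> \<le> a" and g1: "\<forall>\<mu>\<in>Poly_Mapping.keys g1. \<mu> \<le> b"
    unfolding f1_def g1_def keys_restrict_keys by auto
  have f2: "\<forall>\<mu>\<in>Poly_Mapping.keys f2. \<mu> < a" and g2: "\<forall>\<mu>\<in>Poly_Mapping.keys g2. \<mu> < b"
    unfolding f2_def g2_def keys_restrict_keys a_def b_def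
    using keys_le_init_mon order.strict_iff_order by auto
  define h where "h = f1 * g2 + f2 * g1 + f2 * g2"
  have "\<forall>\<mu>\<in>Poly_Mapping.keys h. \<mu> < a + b"
  proof -
    have "\<forall>\<mu>\<in>Poly_Mapping.keys (f1 * g2). \<mu> < a + b"
      using keys_mult[of f1 g2] f1 g2 by (force intro: add_le_less_mono)
    moreover have "\<forall>\<mu>\<in>Poly_Mapping.keys (f2 * g1). \<mu> < a + b"
      using keys_mult[of f2 g1] f2 g1 by (force intro: add_less_le_mono)
    moreover have "\<forall>\<mu>\<in>Poly_Mapping.keys (f2 * g2). \<mu> < a + b"
      using keys_mult[of f2 g2] f2 g2 by (force intro: add_strict_mono)
    ultimately show ?thesis
      using keys_add[of "f1 * g2 + f2 * g1" "f2 * g2"] keys_add[of "f1 * g2" "f2 * g1"]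
      unfolding h_def by blast
  qed
  then have "Poly_Mapping.lookup h (a + b) = 0"
    by (meson in_keys_iff less_irrefl)
  moreover have "f * g = f1 * g1 + h"
  proof -
    have "f = f1 + f2" "g = g1 + g2"
      unfolding f1_def f2_def g1_def g2_def by (rule restrict_keys_split)+
    then show ?thesis
      unfolding h_def by (simp add: algebra_simps)
  qed
  ultimately show ?thesis
    unfolding a_def b_def by (simp add: lookup_add f1_def g1_def a_def b_def restrict_keys_single mult_single)
qed

lemma init_mon_mult:
  fixes f g :: "'k::field mpoly"
  assumes f: "f \<noteq> 0" and g: "g \<noteq> 0"
  shows "f * g \<noteq> 0" and "init_mon (f * g) = init_mon f + init_mon g"
proof -
  have in_keys: "init_mon f + init_mon g \<in> Poly_Mapping.keys (f * g)"
    using lookup_mult_init_mon[of f g] lookup_init_mon_nonzero[OF f] lookup_init_mon_nonzero[OF g]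
    by (simp add: in_keys_iff)
  then show "f * g \<noteq> 0" by auto
  have "\<forall>\<nu>\<in>Poly_Mapping.keys (f * g). \<nu> \<le> init_mon f + init_mon g"
    using keys_mult[of f g] keys_le_init_mon by (force intro: add_mono)
  then show "init_mon (f * g) = init_mon f + init_mon g"
    using init_mon_unique[OF in_keys] by blast
qed

lemma keys_sub_cancel_init_mon:
  fixes p v :: "'k::field mpoly"
  assumes p: "p \<noteq> 0" and init: "init_mon p = init_mon v"
  defines "c \<equiv> Poly_Mapping.lookup v (init_mon v) / Poly_Mapping.lookup p (init_mon v)"
  shows "\<forall>\<nu>\<in>Poly_Mapping.keys (v - smul c p). \<nu> < init_mon v"
proof
  fix \<nu> assume \<nu>: "\<nu> \<in> Poly_Mapping.keys (v - smul c p)"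
  then have "\<nu> \<in> Poly_Mapping.keys v \<or> \<nu> \<in> Poly_Mapping.keys p"
    by (auto simp: in_keys_iff lookup_minus)
  then have "\<nu> \<le> init_mon v"
    using keys_le_init_mon[of \<nu> v] keys_le_init_mon[of \<nu> p] init by auto
  moreover have "\<nu> \<noteq> init_mon v"
    using \<nu> lookup_init_mon_nonzero[OF p] init unfolding c_def by (auto simp: in_keys_iff lookup_minus)
  ultimately show "\<nu> < init_mon v" by simp
qed

lemma smul_of_same_init_mon:
  fixes V :: "'k::field mpoly set"
  assumes V: "K.subspace V" and f: "f \<in> V" "f \<noteq> 0"
    and same: "\<And>u. u \<in> V \<Longrightarrow> u \<noteq> 0 \<Longrightarrow> init_mon u = init_mon f" and v: "v \<in> V"
  shows "\<exists>c. v = smul c f"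
proof (cases "v = 0")
  case False
  define c where "c = Poly_Mapping.lookup v (init_mon v) / Poly_Mapping.lookup f (init_mon v)"
  have less: "\<forall>\<nu>\<in>Poly_Mapping.keys (v - smul c f). \<nu> < init_mon v"
    unfolding c_def using same[OF v False] by (intro keys_sub_cancel_init_mon[OF f(2)]) simp
  have "v - smul c f = 0"
  proof (rule ccontr)
    assume nz: "v - smul c f \<noteq> 0"
    have "v - smul c f \<in> V" using v f(1) by (intro K.subspace_diff[OF V] K.subspace_scale[OF V])
    then have "init_mon (v - smul c f) = init_mon v" using same nz same[OF v False] by simp
    then show False using less init_mon_in_keys[OF nz] by fastforce
  qed
  then show ?thesis by auto
qed (rule exI[of _ 0], simp)

section \<open>Bases and echelon bases\<close>

lemma lin_indepK_distinct:
  fixes fs :: "'k::field mpoly list"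
  assumes "lin_indepK fs" shows "distinct fs"
proof (rule ccontr)
  assume "\<not> distinct fs"
  then obtain i j where ij: "i < length fs" "j < length fs" "i \<noteq> j" "fs ! i = fs ! j"
    by (auto simp: distinct_conv_nth)
  define c where "c = (\<lambda>k. if k = i then (1::'k) else if k = j then -1 else 0)"
  have "(\<Sum>k<length fs. smul (c k) (fs ! k)) = (\<Sum>k\<in>{i, j}. smul (c k) (fs ! k))"
    by (rule sum.mono_neutral_right) (auto simp: c_def ij smul_eq_single_mult)
  also have "\<dots> = 0" using ij by (simp add: c_def smul_eq_single_mult single_uminus)
  finally have "c i = 0" using assms ij(1) unfolding lin_indepK_def by blast
  then show False by (simp add: c_def)
qed

lemma lin_indepK_imp_independent:
  fixes fs :: "'k::field mpoly list"
  assumes li: "lin_indepK fs" shows "K.independent (set fs)"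
  unfolding K.independent_explicit_module
proof (intro allI impI)
  fix t u v assume t: "finite t" "t \<subseteq> set fs" "(\<Sum>v\<in>t. smul (u v) v) = 0" "v \<in> t"
  define c where "c = (\<lambda>k. if fs ! k \<in> t then u (fs ! k) else 0)"
  have "(\<Sum>k<length fs. smul (c k) (fs ! k)) = (\<Sum>w\<in>set fs. smul (if w \<in> t then u w else 0) w)"
    using sum.reindex_bij_betw[OF bij_betw_nth[of fs "{..<length fs}" "set fs"],
        of "\<lambda>w. smul (if w \<in> t then u w else 0) w"] lin_indepK_distinct[OF li]
    unfolding c_def by (simp add: if_distrib)
  also have "\<dots> = (\<Sum>w\<in>t. smul (u w) w)"
    by (rule sum.mono_neutral_cong_right) (use t in \<open>auto simp: smul_eq_single_mult\<close>)
  finally have "\<forall>k<length fs. c k = 0" using li t(3) unfolding lin_indepK_def by simp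
  moreover obtain k where "k < length fs" "fs ! k = v" using t by (metis in_set_conv_nth subsetD)
  ultimately show "u v = 0" using t(4) by (force simp: c_def)
qed

lemma dimK_eq_length:
  fixes fs :: "'k::field mpoly list"
  assumes "is_basisK V fs" shows "dimK V = length fs"
proof -
  have length_eq_dim: "length gs = K.dim V" if "is_basisK V gs" for gs :: "'k mpoly list"
  proof -
    have "V = K.span (set gs)" and ind: "K.independent (set gs)" and "distinct gs"
      using that lin_indepK_imp_independent lin_indepK_distinct
      unfolding is_basisK_def spanK_eq_span by auto
    then show ?thesis using K.dim_span_eq_card_independent[OF ind] by (simp add: distinct_card)
  qed
  show ?thesis unfolding dimK_def
    by (rule the_equality) (use assms length_eq_dim in auto)
qed

lemma lin_indepK_if_init_mon_decreasing:
  fixes fs :: "'k::field mpoly list"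
  assumes nz: "0 \<notin> set fs" and sorted: "sorted_wrt (\<lambda>f g. init_mon g < init_mon f) fs"
  shows "lin_indepK fs"
  unfolding lin_indepK_def
proof (intro allI impI)
  fix c i assume sum0: "(\<Sum>i<length fs. smul (c i) (fs ! i)) = 0" and i: "i < length fs"
  show "c i = 0"
  proof (rule ccontr)
    assume "c i \<noteq> 0"
    define i0 where "i0 = (LEAST k. k < length fs \<and> c k \<noteq> 0)"
    have i0: "i0 < length fs" "c i0 \<noteq> 0"
      using LeastI[of "\<lambda>k. k < length fs \<and> c k \<noteq> 0" i] i \<open>c i \<noteq> 0\<close> unfolding i0_def by auto
    have below: "c k = 0" if "k < i0" for k
      using not_less_Least[of k "\<lambda>k. k < length fs \<and> c k \<noteq> 0"] that i0 unfolding i0_def by auto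
    define \<mu> where "\<mu> = init_mon (fs ! i0)"
    have above: "Poly_Mapping.lookup (fs ! k) \<mu> = 0" if "i0 < k" "k < length fs" for k
    proof -
      have "init_mon (fs ! k) < \<mu>" using sorted that unfolding \<mu>_def by (simp add: sorted_wrt_iff_nth_less)
      then have "\<mu> \<notin> Poly_Mapping.keys (fs ! k)" using keys_le_init_mon leD by blast
      then show ?thesis by (simp add: in_keys_iff)
    qed
    have "0 = Poly_Mapping.lookup (\<Sum>k<length fs. smul (c k) (fs ! k)) \<mu>" using sum0 by simp
    also have "\<dots> = (\<Sum>k<length fs. c k * Poly_Mapping.lookup (fs ! k) \<mu>)"
      by (simp add: lookup_sum)
    also have "\<dots> = (\<Sum>k\<in>{i0}. c k * Poly_Mapping.lookup (fs ! k) \<mu>)"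
      by (rule sum.mono_neutral_right) (use i0 below above in \<open>auto simp: nat_neq_iff\<close>)
    also have "\<dots> = c i0 * Poly_Mapping.lookup (fs ! i0) \<mu>"
      by simp
    moreover have "fs ! i0 \<noteq> 0" using nz nth_mem[OF i0(1)] by metis
    ultimately show False
      using i0(2) lookup_init_mon_nonzero[of "fs ! i0"] unfolding \<mu>_def by simp
  qed
qed

lemma span_init_mon_representatives:
  fixes V :: "'k::field mpoly set"
  assumes V: "K.subspace V" and fin: "finite Mons" and keys: "\<And>v. v \<in> V \<Longrightarrow> Poly_Mapping.keys v \<subseteq> Mons"
    and rep: "\<And>v. v \<in> V \<Longrightarrow> v \<noteq> 0 \<Longrightarrow> \<exists>p\<in>P. p \<noteq> 0 \<and> init_mon p = init_mon v"
    and P: "P \<subseteq> V"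
  shows "V \<subseteq> K.span P"
proof
  fix v assume "v \<in> V"
  then show "v \<in> K.span P"
  proof (induction v rule: measure_induct_rule[where f = "\<lambda>v. card {\<nu>\<in>Mons. \<nu> < init_mon v}"])
    case (less v)
    show ?case
    proof (cases "v = 0")
      case False
      then obtain p where p: "p \<in> P" "p \<noteq> 0" "init_mon p = init_mon v" using rep less.prems by blast
      define c where "c = Poly_Mapping.lookup v (init_mon v) / Poly_Mapping.lookup p (init_mon v)"
      define v' where "v' = v - smul c p"
      have v': "v' \<in> V"
        unfolding v'_def using p P less.prems by (intro K.subspace_diff[OF V] K.subspace_scale[OF V]) auto
      have v'_span: "v' \<in> K.span P"
      proof (cases "v' = 0")
        case False
        have lt: "init_mon v' < init_mon v"
          using keys_sub_cancel_init_mon[OF p(2,3)] init_mon_in_keys[OF False] unfolding v'_def c_def by blast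
        then have "{\<nu>\<in>Mons. \<nu> < init_mon v'} \<subset> {\<nu>\<in>Mons. \<nu> < init_mon v}"
          using keys[OF v'] init_mon_in_keys[OF False] by auto
        then have "card {\<nu>\<in>Mons. \<nu> < init_mon v'} < card {\<nu>\<in>Mons. \<nu> < init_mon v}"
          using fin by (intro psubset_card_mono) auto
        then show ?thesis using less.IH v' by blast
      qed (simp add: K.span_zero)
      have "v' + smul c p \<in> K.span P"
        using K.span_add[OF v'_span K.span_scale[OF K.span_base[OF p(1)]]] .
      then show ?thesis unfolding v'_def by simp
    qed (simp add: K.span_zero)
  qed
qed

lemma echelon_basis:
  fixes V :: "'k::field mpoly set"
  assumes V: "K.subspace V" and fin: "finite Mons" and keys: "\<And>v. v \<in> V \<Longrightarrow> Poly_Mapping.keys v \<subseteq> Mons"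
  obtains fs where "is_basisK V fs" "0 \<notin> set fs" "sorted_wrt (\<lambda>f g. init_mon g < init_mon f) fs"
    "init_mon ` set fs = init_mon ` (V - {0})"
proof
  define M where "M = init_mon ` (V - {0})"
  have "M \<subseteq> Mons" unfolding M_def using keys init_mon_in_keys by blast
  then have "finite M" using fin finite_subset by blast
  define pick where "pick = (\<lambda>\<mu>. SOME v. v \<in> V - {0} \<and> init_mon v = \<mu>)"
  have pick: "pick \<mu> \<in> V - {0} \<and> init_mon (pick \<mu>) = \<mu>" if "\<mu> \<in> M" for \<mu>
    unfolding pick_def by (rule someI_ex) (use that in \<open>auto simp: M_def\<close>)
  define fs where "fs = map pick (rev (sorted_list_of_set M))"
  have set_fs: "set fs = pick ` M" and init_fs: "init_mon ` set fs = M"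
    unfolding fs_def using \<open>finite M\<close> pick by (force simp: image_image)+
  show "0 \<notin> set fs" and "init_mon ` set fs = init_mon ` (V - {0})"
    using pick init_fs unfolding set_fs M_def by auto
  have "sorted_wrt (\<lambda>\<mu> \<nu>. \<nu> < \<mu>) (rev (sorted_list_of_set M))"
    unfolding sorted_wrt_rev using strict_sorted_list_of_set by simp
  then show sorted: "sorted_wrt (\<lambda>f g. init_mon g < init_mon f) fs"
    unfolding fs_def sorted_wrt_map using pick \<open>finite M\<close> by (auto elim: sorted_wrt_mono_rel[rotated])
  have "set fs \<subseteq> V" unfolding set_fs using pick by blast
  moreover have "V \<subseteq> K.span (set fs)"
    using init_fs pick \<open>set fs \<subseteq> V\<close> unfolding set_fs M_def
    by (intro span_init_mon_representatives[OF V fin keys]) auto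
  ultimately show "is_basisK V fs"
    unfolding is_basisK_def spanK_eq_span
    using lin_indepK_if_init_mon_decreasing[OF \<open>0 \<notin> set fs\<close> sorted] K.span_minimal[OF _ V] by blast
qed

section \<open>Polynomials over the subring and their ideals\<close>

definition vars_below :: "nat \<Rightarrow> (nat \<Rightarrow>\<^sub>0 nat) \<Rightarrow> bool" where
  "vars_below N \<mu> \<longleftrightarrow> (\<forall>v\<in>Poly_Mapping.keys \<mu>. v < N)"

lemma vars_below_add: "vars_below N \<mu> \<Longrightarrow> vars_below N \<nu> \<Longrightarrow> vars_below N (\<mu> + \<nu>)"
  unfolding vars_below_def using keys_add[of \<mu> \<nu>] by blast

lemma vars_below_add_right: "vars_below N (\<mu> + \<nu>) \<Longrightarrow> vars_below N \<nu>"
  unfolding vars_below_def by (auto simp: in_keys_iff lookup_add)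

lemma PolyR_iff:
  "f \<in> PolyR D N \<longleftrightarrow> (\<forall>\<mu>\<in>Poly_Mapping.keys f. vars_below N \<mu>) \<and> (\<forall>\<mu>. Poly_Mapping.lookup f \<mu> \<in> D)"
  unfolding PolyR_def PolyS_def vars_below_def by auto

lemma subring_sum: "is_subring D \<Longrightarrow> (\<And>x. x \<in> S \<Longrightarrow> g x \<in> D) \<Longrightarrow> sum g S \<in> D"
  by (induction S rule: infinite_finite_induct) (auto simp: is_subring_def)

lemma PolyR_0: "is_subring D \<Longrightarrow> 0 \<in> PolyR D N"
  unfolding PolyR_iff is_subring_def by auto

lemma PolyR_1: "is_subring D \<Longrightarrow> 1 \<in> PolyR D N"
  unfolding PolyR_iff is_subring_def vars_below_def
  by (auto simp flip: single_one simp: lookup_single when_def)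

lemma PolyR_single:
  "is_subring D \<Longrightarrow> c \<in> D \<Longrightarrow> vars_below N \<mu> \<Longrightarrow> Poly_Mapping.single \<mu> c \<in> PolyR D N"
  unfolding PolyR_iff is_subring_def by (auto simp: lookup_single when_def)

lemma PolyR_add: "is_subring D \<Longrightarrow> f \<in> PolyR D N \<Longrightarrow> g \<in> PolyR D N \<Longrightarrow> f + g \<in> PolyR D N"
  using keys_add[of f g] unfolding PolyR_iff is_subring_def by (auto simp: lookup_add)

lemma mult_eq_sum_single:
  "f * g = (\<Sum>\<mu>\<in>Poly_Mapping.keys f. \<Sum>\<nu>\<in>Poly_Mapping.keys g.
      Poly_Mapping.single (\<mu> + \<nu>) (Poly_Mapping.lookup f \<mu> * Poly_Mapping.lookup g \<nu>))"
proof -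
  have sum_single: "h = (\<Sum>\<mu>\<in>Poly_Mapping.keys h. Poly_Mapping.single \<mu> (Poly_Mapping.lookup h \<mu>))"
    for h :: "('a \<Rightarrow>\<^sub>0 'b)"
    by (rule poly_mapping_eqI) (simp add: lookup_sum lookup_single when_def in_keys_iff sum.delta')
  show ?thesis
    by (subst sum_single[of f], subst sum_single[of g])
      (simp add: sum_distrib_left sum_distrib_right mult_single sum.swap[of _ "Poly_Mapping.keys f"])
qed

lemma PolyR_mult:
  assumes D: "is_subring D" and f: "f \<in> PolyR D N" and g: "g \<in> PolyR D N"
  shows "f * g \<in> PolyR D N"
  unfolding PolyR_iff
proof
  show "\<forall>\<mu>\<in>Poly_Mapping.keys (f * g). vars_below N \<mu>"
    using keys_mult[of f g] f g vars_below_add unfolding PolyR_iff by blast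
  have "Poly_Mapping.lookup (f * g) \<mu> \<in> D" for \<mu>
    using f g D unfolding PolyR_iff
    by (subst mult_eq_sum_single)
      (auto simp: lookup_sum lookup_single when_def is_subring_def intro!: subring_sum[OF D])
  then show "\<forall>\<mu>. Poly_Mapping.lookup (f * g) \<mu> \<in> D" ..
qed

lemma is_ideal_PolyR: "is_subring D \<Longrightarrow> is_ideal D N (PolyR D N)"
  unfolding is_ideal_def using PolyR_0 PolyR_add PolyR_mult by blast

lemma is_ideal_subset: "is_ideal D N J \<Longrightarrow> J \<subseteq> PolyR D N"
  unfolding is_ideal_def by blast

lemma is_ideal_0: "is_ideal D N J \<Longrightarrow> 0 \<in> J"
  unfolding is_ideal_def by blast

lemma is_ideal_add: "is_ideal D N J \<Longrightarrow> f \<in> J \<Longrightarrow> g \<in> J \<Longrightarrow> f + g \<in> J"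
  unfolding is_ideal_def by blast

lemma is_ideal_mult_left: "is_ideal D N J \<Longrightarrow> r \<in> PolyR D N \<Longrightarrow> f \<in> J \<Longrightarrow> r * f \<in> J"
  unfolding is_ideal_def by blast

lemma is_ideal_sum: "is_ideal D N J \<Longrightarrow> (\<And>x. x \<in> S \<Longrightarrow> g x \<in> J) \<Longrightarrow> sum g S \<in> J"
  by (induction S rule: infinite_finite_induct) (auto intro: is_ideal_0 is_ideal_add)

lemma ideal_gen_least: "is_ideal D N J \<Longrightarrow> G \<subseteq> J \<Longrightarrow> ideal_gen D N G \<subseteq> J"
  unfolding ideal_gen_def by blast

lemma ideal_gen_superset: "G \<subseteq> ideal_gen D N G"
  unfolding ideal_gen_def by blast

lemma is_ideal_ideal_gen:
  assumes D: "is_subring D" and G: "G \<subseteq> PolyR D N"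
  shows "is_ideal D N (ideal_gen D N G)"
proof -
  have "PolyR D N \<in> {J. is_ideal D N J \<and> G \<subseteq> J}" using is_ideal_PolyR[OF D] G by blast
  then show ?thesis unfolding ideal_gen_def is_ideal_def by (auto simp: is_ideal_def)
qed

lemma is_ideal_mult_preimage:
  assumes D: "is_subring D" and J: "is_ideal D N J" and a: "a \<in> PolyR D N"
  shows "is_ideal D N {y \<in> PolyR D N. a * y \<in> J}"
  unfolding is_ideal_def
  using PolyR_0[OF D] PolyR_add[OF D] PolyR_mult[OF D] is_ideal_0[OF J] is_ideal_add[OF J]
    is_ideal_mult_left[OF J]
  by (auto simp: distrib_left mult.left_commute[of a])

lemma is_ideal_ideal_mult:
  "is_subring D \<Longrightarrow> A \<subseteq> PolyR D N \<Longrightarrow> B \<subseteq> PolyR D N \<Longrightarrow> is_ideal D N (ideal_mult D N A B)"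
  unfolding ideal_mult_def by (rule is_ideal_ideal_gen) (auto intro: PolyR_mult)

lemma mult_mem_ideal_mult: "a \<in> A \<Longrightarrow> b \<in> B \<Longrightarrow> a * b \<in> ideal_mult D N A B"
  unfolding ideal_mult_def using ideal_gen_superset[of "{a * b |a b. a \<in> A \<and> b \<in> B}" D N] by blast

lemma ideal_mult_least:
  "is_ideal D N J \<Longrightarrow> (\<And>a b. a \<in> A \<Longrightarrow> b \<in> B \<Longrightarrow> a * b \<in> J) \<Longrightarrow> ideal_mult D N A B \<subseteq> J"
  unfolding ideal_mult_def by (rule ideal_gen_least) blast+

lemma ideal_mult_commute: "ideal_mult D N A B = ideal_mult D N B A"
proof -
  have "{a * b |a b. a \<in> A \<and> b \<in> B} = {a * b |a b. a \<in> B \<and> b \<in> A}"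
    by (metis (no_types, opaque_lifting) mult.commute)
  then show ?thesis unfolding ideal_mult_def by simp
qed

lemma ideal_mult_assoc_subset:
  assumes D: "is_subring D" and A: "is_ideal D N A" and B: "is_ideal D N B" and C: "is_ideal D N C"
  shows "ideal_mult D N A (ideal_mult D N B C) \<subseteq> ideal_mult D N (ideal_mult D N A B) C"
proof -
  let ?ABC = "ideal_mult D N (ideal_mult D N A B) C"
  have ABC: "is_ideal D N ?ABC"
    using A B C by (intro is_ideal_ideal_mult[OF D] is_ideal_subset) auto
  show ?thesis
  proof (rule ideal_mult_least[OF ABC])
    fix a y assume a: "a \<in> A" and y: "y \<in> ideal_mult D N B C"
    have "ideal_mult D N B C \<subseteq> {y \<in> PolyR D N. a * y \<in> ?ABC}"
    proof (rule ideal_mult_least[OF is_ideal_mult_preimage[OF D ABC]])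
      fix b c assume "b \<in> B" "c \<in> C"
      then have "b * c \<in> PolyR D N"
        using B C is_ideal_subset PolyR_mult[OF D] by blast
      moreover have "a * (b * c) \<in> ?ABC"
        using mult_mem_ideal_mult[OF mult_mem_ideal_mult[OF a \<open>b \<in> B\<close>] \<open>c \<in> C\<close>] by (simp add: mult.assoc)
      ultimately show "b * c \<in> {y \<in> PolyR D N. a * y \<in> ?ABC}" by blast
    qed (use A a is_ideal_subset in blast)
    then show "a * y \<in> ?ABC" using y by blast
  qed
qed

lemma ideal_mult_assoc:
  assumes D: "is_subring D" and A: "is_ideal D N A" and B: "is_ideal D N B" and C: "is_ideal D N C"
  shows "ideal_mult D N A (ideal_mult D N B C) = ideal_mult D N (ideal_mult D N A B) C"
proof
  show "ideal_mult D N A (ideal_mult D N B C) \<subseteq> ideal_mult D N (ideal_mult D N A B) C"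
    using ideal_mult_assoc_subset[OF D A B C] .
  have "ideal_mult D N (ideal_mult D N A B) C = ideal_mult D N C (ideal_mult D N B A)"
    by (simp add: ideal_mult_commute)
  also have "\<dots> \<subseteq> ideal_mult D N (ideal_mult D N C B) A"
    using ideal_mult_assoc_subset[OF D C B A] .
  also have "\<dots> = ideal_mult D N A (ideal_mult D N B C)"
    by (simp add: ideal_mult_commute)
  finally show "ideal_mult D N (ideal_mult D N A B) C \<subseteq> ideal_mult D N A (ideal_mult D N B C)" .
qed

lemma ideal_mult_PolyR_left:
  assumes D: "is_subring D" and J: "is_ideal D N J"
  shows "ideal_mult D N (PolyR D N) J = J"
proof
  show "ideal_mult D N (PolyR D N) J \<subseteq> J"
    by (rule ideal_mult_least[OF J]) (use J is_ideal_mult_left in blast)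
  show "J \<subseteq> ideal_mult D N (PolyR D N) J"
    using mult_mem_ideal_mult[of 1 "PolyR D N" _ J D N] PolyR_1[OF D] by auto
qed

lemma is_ideal_ideal_prod_list:
  "is_subring D \<Longrightarrow> \<forall>J\<in>set Js. is_ideal D N J \<Longrightarrow> is_ideal D N (ideal_prod_list D N Js)"
  unfolding ideal_prod_list_def
  by (induction Js) (simp_all add: is_ideal_PolyR is_ideal_ideal_mult is_ideal_subset)

lemma ideal_prod_list_append:
  assumes D: "is_subring D" and "\<forall>J\<in>set Is. is_ideal D N J" and Js: "\<forall>J\<in>set Js. is_ideal D N J"
  shows "ideal_prod_list D N (Is @ Js) = ideal_mult D N (ideal_prod_list D N Is) (ideal_prod_list D N Js)"
  using assms(2)
proof (induction Is)
  case Nil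
  then show ?case
    using ideal_mult_PolyR_left[OF D is_ideal_ideal_prod_list[OF D Js]] by (simp add: ideal_prod_list_def)
next
  case (Cons I Is)
  then show ?case
    using ideal_mult_assoc[OF D _ is_ideal_ideal_prod_list[OF D] is_ideal_ideal_prod_list[OF D Js], of I Is]
    by (simp add: ideal_prod_list_def)
qed

lemma ideal_prod_list_replicate_absorb:
  assumes D: "is_subring D" and ideals: "\<forall>L\<in>set As \<union> set Js. is_ideal D N L"
    and absorb: "ideal_mult D N (ideal_prod_list D N As) (ideal_prod_list D N Js) = ideal_prod_list D N Js"
  shows "ideal_prod_list D N (concat (replicate n As) @ Js) = ideal_prod_list D N Js"
proof (induction n)
  case (Suc n)
  have "\<forall>L\<in>set (concat (replicate n As) @ Js). is_ideal D N L"
    using ideals by (auto simp: set_replicate_conv_if)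
  then have "ideal_prod_list D N (As @ concat (replicate n As) @ Js)
      = ideal_mult D N (ideal_prod_list D N As) (ideal_prod_list D N (concat (replicate n As) @ Js))"
    using ideals by (intro ideal_prod_list_append[OF D]) auto
  then show ?case using Suc absorb by simp
qed simp

text \<open>From \<open>A J = J\<close> one gets \<open>J = A\<^sup>n J\<close> for all \<open>n\<close>, i.e. factorizations of \<open>J\<close> into
  atoms of unbounded length.\<close>

lemma ideals_BF_mult_absorb:
  assumes D: "is_subring D" and BF: "ideals_BF D N"
    and A: "A \<in> nz_ideals D N" "A \<noteq> PolyR D N" and J: "J \<in> nz_ideals D N"
  shows "ideal_mult D N A J \<noteq> J"
proof
  assume absorb: "ideal_mult D N A J = J"
  let ?lengths = "{length Ls |Ls. (\<forall>L\<in>set Ls. ideal_atom D N L) \<and> J = ideal_prod_list D N Ls}"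
  obtain As where As: "\<forall>L\<in>set As. ideal_atom D N L" "A = ideal_prod_list D N As"
    using BF A(1) unfolding ideals_BF_def by blast
  obtain Js where Js: "\<forall>L\<in>set Js. ideal_atom D N L" "J = ideal_prod_list D N Js"
    using BF J unfolding ideals_BF_def by blast
  have fin: "finite ?lengths" using BF J unfolding ideals_BF_def by blast
  have ideals: "\<forall>L\<in>set As \<union> set Js. is_ideal D N L"
    using As(1) Js(1) unfolding ideal_atom_def nz_ideals_def by blast
  have "As \<noteq> []" using As(2) A(2) by (auto simp: ideal_prod_list_def)
  have power: "ideal_prod_list D N (concat (replicate n As) @ Js) = J" for n
    using ideal_prod_list_replicate_absorb[OF D ideals] absorb As(2) Js(2) by simp
  have in_lengths: "length (concat (replicate n As) @ Js) \<in> ?lengths" for n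
    using power As(1) Js(1) by fastforce
  have long: "n \<le> length (concat (replicate n As) @ Js)" for n
  proof -
    have "n \<le> n * length As" using \<open>As \<noteq> []\<close> by (cases As) auto
    moreover have "length (concat (replicate n As) @ Js) = n * length As + length Js"
      by (simp add: length_concat sum_list_replicate)
    ultimately show ?thesis by linarith
  qed
  have "Suc (Max ?lengths) \<le> Max ?lengths"
    using long Max_ge[OF fin in_lengths] by (rule le_trans)
  then show False by simp
qed

section \<open>Total degree and homogeneous components\<close>

lemma tdeg_eq_sum_superset:
  "finite S \<Longrightarrow> Poly_Mapping.keys \<mu> \<subseteq> S \<Longrightarrow> tdeg \<mu> = (\<Sum>v\<in>S. Poly_Mapping.lookup \<mu> v)"
  unfolding tdeg_def by (rule sum.mono_neutral_left) (auto simp: in_keys_iff)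

lemma tdeg_add: "tdeg (\<mu> + \<nu>) = tdeg \<mu> + tdeg \<nu>"
proof -
  let ?S = "Poly_Mapping.keys \<mu> \<union> Poly_Mapping.keys \<nu>"
  have "tdeg (\<mu> + \<nu>) = (\<Sum>v\<in>?S. Poly_Mapping.lookup (\<mu> + \<nu>) v)"
    using keys_add[of \<mu> \<nu>] by (intro tdeg_eq_sum_superset) auto
  also have "\<dots> = tdeg \<mu> + tdeg \<nu>"
    using tdeg_eq_sum_superset[of ?S \<mu>] tdeg_eq_sum_superset[of ?S \<nu>] by (simp add: lookup_add sum.distrib)
  finally show ?thesis .
qed

lemma tdeg_eq_0_iff: "tdeg \<mu> = 0 \<longleftrightarrow> \<mu> = 0"
  unfolding tdeg_def by (auto simp: in_keys_iff simp flip: keys_eq_empty)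

interpretation tdeg: additive_weight tdeg
  by unfold_locales (rule tdeg_add)

lemma lookup_monXY: "Poly_Mapping.lookup (monXY a b) i = (if i = 0 then a else if i = 1 then b else 0)"
  unfolding monXY_def by (simp add: lookup_add lookup_single when_def)

lemma keys_monXY: "Poly_Mapping.keys (monXY a b) \<subseteq> {0, 1}"
  by (auto simp: in_keys_iff lookup_monXY split: if_splits)

lemma tdeg_monXY: "tdeg (monXY a b) = a + b"
  using keys_monXY by (subst tdeg_eq_sum_superset[of "{0, 1}"]) (auto simp: lookup_monXY)

lemma monXY_add: "monXY a b + monXY c d = monXY (a + c) (b + d)"
  unfolding monXY_def by (simp add: single_add algebra_simps)

lemma vars_below_monXY: "N \<ge> 2 \<Longrightarrow> vars_below N (monXY a b)"
  unfolding vars_below_def using keys_monXY by fastforce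

lemma hcomp_eq_restrict_keys: "hcomp t f = restrict_keys (\<lambda>\<mu>. tdeg \<mu> = t) f"
proof (rule poly_mapping_eqI)
  fix \<mu>
  have "Poly_Mapping.lookup (hcomp t f) \<mu>
      = (\<Sum>\<nu>\<in>Poly_Mapping.keys f. if \<nu> = \<mu> then (if tdeg \<mu> = t then Poly_Mapping.lookup f \<mu> else 0) else 0)"
    unfolding hcomp_def lookup_sum by (intro sum.cong) (auto simp: lookup_single when_def)
  then show "Poly_Mapping.lookup (hcomp t f) \<mu> = Poly_Mapping.lookup (restrict_keys (\<lambda>\<mu>. tdeg \<mu> = t) f) \<mu>"
    by (simp add: lookup_restrict_keys in_keys_iff)
qed

lemma keys_hcomp: "Poly_Mapping.keys (hcomp t f) = {\<mu> \<in> Poly_Mapping.keys f. tdeg \<mu> = t}"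
  by (simp add: hcomp_eq_restrict_keys keys_restrict_keys)

lemma hcomp_add: "hcomp t (f + g) = hcomp t f + hcomp t g"
  by (simp add: hcomp_eq_restrict_keys restrict_keys_add)

lemma hcomp_0_eq_const: "hcomp 0 f = Poly_Mapping.single 0 (Poly_Mapping.lookup f 0)"
  by (rule poly_mapping_eqI)
    (auto simp: hcomp_eq_restrict_keys lookup_restrict_keys lookup_single when_def tdeg_eq_0_iff)

lemma hcomp_mult:
  assumes "\<forall>\<mu>\<in>Poly_Mapping.keys f. s \<le> tdeg \<mu>" "\<forall>\<mu>\<in>Poly_Mapping.keys g. t \<le> tdeg \<mu>"
  shows "hcomp (s + t) (f * g) = hcomp s f * hcomp t (g :: 'k::field mpoly)"
  unfolding hcomp_eq_restrict_keys using assms by (rule tdeg.restrict_weight_mult)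

lemma is_ideal_lowest_part_in:
  assumes D: "is_subring D" and V: "K.subspace V"
  shows "is_ideal D N {h \<in> PolyR D N. (\<forall>\<mu>\<in>Poly_Mapping.keys h. t \<le> tdeg \<mu>) \<and> hcomp t h \<in> V}"
    (is "is_ideal D N ?S")
  unfolding is_ideal_def
proof (intro conjI ballI)
  show "?S \<subseteq> PolyR D N" "0 \<in> ?S"
    using PolyR_0[OF D] K.subspace_0[OF V] by (auto simp: hcomp_eq_restrict_keys restrict_keys_eq_0)
  fix f g assume f: "f \<in> ?S" and g: "g \<in> ?S"
  then show "f + g \<in> ?S"
    using PolyR_add[OF D] keys_add[of f g] K.subspace_add[OF V] by (auto simp: hcomp_add)
next
  fix r f assume r: "r \<in> PolyR D N" and f: "f \<in> ?S"
  have "hcomp (0 + t) (r * f) = hcomp 0 r * hcomp t f"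
    using f by (intro hcomp_mult) auto
  also have "\<dots> = smul (Poly_Mapping.lookup r 0) (hcomp t f)"
    by (simp add: hcomp_0_eq_const smul_eq_single_mult)
  finally have "hcomp t (r * f) \<in> V" using K.subspace_scale[OF V] f by simp
  moreover have "\<forall>\<mu>\<in>Poly_Mapping.keys (r * f). 0 + t \<le> tdeg \<mu>"
    using f by (intro tdeg.keys_mult_weight_ge) auto
  ultimately show "r * f \<in> ?S" using PolyR_mult[OF D r] f by simp
qed

lemma keys_compK: "f \<in> compK J t \<Longrightarrow> \<forall>\<mu>\<in>Poly_Mapping.keys f. tdeg \<mu> = t"
  unfolding compK_eq_span by (rule keys_span_pred) (auto simp: keys_hcomp)

lemma hcomp_mdeg_nonzero: "f \<noteq> 0 \<Longrightarrow> hcomp (mdeg f) f \<noteq> 0"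
proof -
  assume "f \<noteq> 0"
  then obtain \<mu> where "\<mu> \<in> Poly_Mapping.keys f" by fastforce
  then have "hcomp (tdeg \<mu>) f \<noteq> 0" by (force simp: keys_hcomp simp flip: keys_eq_empty)
  then show ?thesis unfolding mdeg_def by (rule LeastI)
qed

lemma mdeg_le_tdeg: "\<mu> \<in> Poly_Mapping.keys f \<Longrightarrow> mdeg f \<le> tdeg \<mu>"
  unfolding mdeg_def by (rule Least_le) (force simp: keys_hcomp simp flip: keys_eq_empty)

lemma mdeg_ideal_attained:
  assumes "J \<noteq> {0}" "0 \<in> J"
  obtains f where "f \<in> J" "f \<noteq> 0" "mdeg f = mdeg_ideal J"
proof -
  obtain f where "f \<in> J" "f \<noteq> 0" using assms by auto
  have "\<exists>f\<in>J. f \<noteq> 0 \<and> mdeg f = mdeg_ideal J"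
    unfolding mdeg_ideal_def by (rule LeastI_ex) (use \<open>f \<in> J\<close> \<open>f \<noteq> 0\<close> in blast)
  then show ?thesis using that by blast
qed

lemma mdeg_ideal_le_tdeg: "f \<in> J \<Longrightarrow> \<mu> \<in> Poly_Mapping.keys f \<Longrightarrow> mdeg_ideal J \<le> tdeg \<mu>"
proof -
  assume "f \<in> J" "\<mu> \<in> Poly_Mapping.keys f"
  then have "f \<noteq> 0" by auto
  then have "mdeg_ideal J \<le> mdeg f" unfolding mdeg_ideal_def using \<open>f \<in> J\<close> by (blast intro: Least_le)
  also have "\<dots> \<le> tdeg \<mu>" using mdeg_le_tdeg[OF \<open>\<mu> \<in> Poly_Mapping.keys f\<close>] .
  finally show ?thesis .
qed

lemma hcomp_mdeg_ideal_nonzero: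
  assumes "J \<in> nz_ideals D N"
  obtains f where "f \<in> J" "hcomp (mdeg_ideal J) f \<noteq> 0"
proof -
  have "J \<noteq> {0}" "0 \<in> J" using assms unfolding nz_ideals_def is_ideal_def by auto
  then obtain f where "f \<in> J" "f \<noteq> 0" "mdeg f = mdeg_ideal J" by (rule mdeg_ideal_attained)
  then show ?thesis using hcomp_mdeg_nonzero that by metis
qed

section \<open>Monomial ideals\<close>

definition mon_divisible :: "(nat \<Rightarrow>\<^sub>0 nat) set \<Rightarrow> (nat \<Rightarrow>\<^sub>0 nat) \<Rightarrow> bool" where
  "mon_divisible G \<mu> \<longleftrightarrow> (\<exists>g\<in>G. \<exists>c. \<mu> = g + c)"

lemma mon_divisible_add_left: "mon_divisible G \<mu> \<Longrightarrow> mon_divisible G (\<nu> + \<mu>)"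
  unfolding mon_divisible_def by (metis add.left_commute add.commute)

lemma mon_divisible_self: "g \<in> G \<Longrightarrow> mon_divisible G g"
  unfolding mon_divisible_def by (metis add_0_right)

lemma poly_mapping_sum_single:
  "f = (\<Sum>\<mu>\<in>Poly_Mapping.keys f. Poly_Mapping.single \<mu> (Poly_Mapping.lookup f \<mu>))"
  by (rule poly_mapping_eqI) (simp add: lookup_sum lookup_single when_def in_keys_iff sum.delta')

lemma is_ideal_mon_divisible:
  assumes D: "is_subring D"
  shows "is_ideal D N {h \<in> PolyR D N. \<forall>\<mu>\<in>Poly_Mapping.keys h. mon_divisible G \<mu>}"
proof -
  have "\<forall>\<mu>\<in>Poly_Mapping.keys (r * f). mon_divisible G \<mu>"
    if "\<forall>\<mu>\<in>Poly_Mapping.keys f. mon_divisible G \<mu>" for r f :: "'a mpoly"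
    using keys_mult[of r f] that mon_divisible_add_left by fastforce
  then show ?thesis
    unfolding is_ideal_def using PolyR_0[OF D] PolyR_add[OF D] PolyR_mult[OF D] keys_add by fastforce
qed

lemma ideal_gen_monomials:
  assumes D: "is_subring D" and G: "\<And>g. g \<in> G \<Longrightarrow> vars_below N g"
  shows "ideal_gen D N (mpoly_of_mon ` G) = {h \<in> PolyR D N. \<forall>\<mu>\<in>Poly_Mapping.keys h. mon_divisible G \<mu>}"
    (is "?I = ?M")
proof
  have gens: "mpoly_of_mon ` G \<subseteq> PolyR D N"
    using PolyR_single[OF D] G D unfolding mpoly_of_mon_def is_subring_def by blast
  then show "?I \<subseteq> ?M"
    by (intro ideal_gen_least[OF is_ideal_mon_divisible[OF D]]) (auto simp: mpoly_of_mon_def mon_divisible_self)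
  show "?M \<subseteq> ?I"
  proof
    fix h assume h: "h \<in> ?M"
    have "(\<Sum>\<mu>\<in>Poly_Mapping.keys h. Poly_Mapping.single \<mu> (Poly_Mapping.lookup h \<mu>)) \<in> ?I"
    proof (rule is_ideal_sum[OF is_ideal_ideal_gen[OF D gens]])
      fix \<mu> assume \<mu>: "\<mu> \<in> Poly_Mapping.keys h"
      then obtain g c where g: "g \<in> G" and \<mu>_eq: "\<mu> = g + c" using h unfolding mon_divisible_def by blast
      have "vars_below N c" "Poly_Mapping.lookup h \<mu> \<in> D"
        using h \<mu> vars_below_add_right[of N g c] unfolding \<mu>_eq PolyR_iff by auto
      then have "Poly_Mapping.single c (Poly_Mapping.lookup h \<mu>) \<in> PolyR D N"
        using PolyR_single[OF D] by blast
      moreover have "mpoly_of_mon g \<in> ?I" using g ideal_gen_superset by blast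
      moreover have "Poly_Mapping.single \<mu> (Poly_Mapping.lookup h \<mu>)
          = Poly_Mapping.single c (Poly_Mapping.lookup h \<mu>) * mpoly_of_mon g"
        unfolding mpoly_of_mon_def mult_single \<mu>_eq by (simp add: add.commute)
      ultimately show "Poly_Mapping.single \<mu> (Poly_Mapping.lookup h \<mu>) \<in> ?I"
        using is_ideal_mult_left[OF is_ideal_ideal_gen[OF D gens]] by simp
    qed
    then show "h \<in> ?I" using poly_mapping_sum_single[of h] by simp
  qed
qed

lemma mult_split_constant_term:
  "a * b = smul (Poly_Mapping.lookup a 0) b + restrict_keys (\<lambda>\<nu>. \<nu> \<noteq> 0) a * (b :: 'k::field mpoly)"
proof -
  have "a = Poly_Mapping.single 0 (Poly_Mapping.lookup a 0) + restrict_keys (\<lambda>\<nu>. \<nu> \<noteq> 0) a"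
    by (rule poly_mapping_eqI) (simp add: lookup_add lookup_restrict_keys lookup_single when_def)
  then have "a * b = (Poly_Mapping.single 0 (Poly_Mapping.lookup a 0) + restrict_keys (\<lambda>\<nu>. \<nu> \<noteq> 0) a) * b"
    by (rule arg_cong)
  then show ?thesis by (simp add: smul_eq_single_mult distrib_right)
qed

text \<open>A monomial of \<open>b\<close> of least degree among those outside the monomial ideal survives in
  \<open>a b\<close>: every other contribution lies in the ideal or has larger degree.\<close>

lemma mon_divisible_cancel_unit:
  fixes a b :: "'k::field mpoly"
  assumes a0: "Poly_Mapping.lookup a 0 \<noteq> 0" and ab: "\<forall>\<mu>\<in>Poly_Mapping.keys (a * b). mon_divisible G \<mu>"
  shows "\<forall>\<mu>\<in>Poly_Mapping.keys b. mon_divisible G \<mu>"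
proof (rule ccontr)
  define T where "T = {\<mu> \<in> Poly_Mapping.keys b. \<not> mon_divisible G \<mu>}"
  assume "\<not> (\<forall>\<mu>\<in>Poly_Mapping.keys b. mon_divisible G \<mu>)"
  then obtain \<nu>0 where "\<nu>0 \<in> T" unfolding T_def by blast
  then obtain \<mu> where \<mu>: "\<mu> \<in> T" and min: "\<forall>\<nu>. \<nu> \<in> T \<longrightarrow> tdeg \<mu> \<le> tdeg \<nu>"
    using ex_has_least_nat[of "\<lambda>\<nu>. \<nu> \<in> T" \<nu>0 tdeg] by blast
  define a' b1 b2 where "a' = restrict_keys (\<lambda>\<nu>. \<nu> \<noteq> 0) a"
    and "b1 = restrict_keys (mon_divisible G) b" and "b2 = restrict_keys (\<lambda>\<nu>. \<not> mon_divisible G \<nu>) b"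
  have "b = b1 + b2" unfolding b1_def b2_def by (rule restrict_keys_split)
  then have ab_eq: "a * b = smul (Poly_Mapping.lookup a 0) b + a' * b1 + a' * b2"
    using mult_split_constant_term[of a b] unfolding a'_def by (simp add: distrib_left add.assoc)
  have "\<forall>\<nu>\<in>Poly_Mapping.keys (a' * b1). mon_divisible G \<nu>"
    using keys_mult[of a' b1] mon_divisible_add_left unfolding b1_def keys_restrict_keys by fastforce
  then have "Poly_Mapping.lookup (a' * b1) \<mu> = 0" using \<mu> unfolding T_def by (auto simp: in_keys_iff)
  moreover have "\<forall>\<nu>\<in>Poly_Mapping.keys (a' * b2). Suc (tdeg \<mu>) \<le> tdeg \<nu>"
  proof -
    have "\<forall>\<nu>\<in>Poly_Mapping.keys a'. 1 \<le> tdeg \<nu>"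
      unfolding a'_def keys_restrict_keys using tdeg_eq_0_iff by (auto simp: Suc_le_eq)
    moreover have "\<forall>\<nu>\<in>Poly_Mapping.keys b2. tdeg \<mu> \<le> tdeg \<nu>"
      using min unfolding b2_def keys_restrict_keys T_def by blast
    ultimately show ?thesis using tdeg.keys_mult_weight_ge by fastforce
  qed
  then have "\<mu> \<notin> Poly_Mapping.keys (a' * b2)" by fastforce
  then have "Poly_Mapping.lookup (a' * b2) \<mu> = 0" by (simp add: in_keys_iff)
  ultimately have "Poly_Mapping.lookup (a * b) \<mu> = Poly_Mapping.lookup a 0 * Poly_Mapping.lookup b \<mu>"
    unfolding ab_eq by (simp add: lookup_add)
  then have "\<mu> \<in> Poly_Mapping.keys (a * b)" using a0 \<mu> unfolding T_def by (simp add: in_keys_iff)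
  then show False using ab \<mu> unfolding T_def by blast
qed

lemma mon_divisible_homogeneous:
  assumes "\<And>g. g \<in> G \<Longrightarrow> tdeg g = m" and "mon_divisible G \<mu>"
  shows "m \<le> tdeg \<mu>" and "tdeg \<mu> = m \<Longrightarrow> \<mu> \<in> G"
proof -
  obtain g c where g: "g \<in> G" and \<mu>: "\<mu> = g + c" using assms(2) unfolding mon_divisible_def by blast
  then have deg: "tdeg \<mu> = m + tdeg c" using assms(1) by (simp add: tdeg_add)
  then show "m \<le> tdeg \<mu>" by simp
  assume "tdeg \<mu> = m"
  then have "c = 0" using deg tdeg_eq_0_iff by simp
  then show "\<mu> \<in> G" using g \<mu> by simp
qed

section \<open>Monomials in \<open>X\<close> and \<open>Y\<close>\<close>

definition xy_deg :: "(nat \<Rightarrow>\<^sub>0 nat) \<Rightarrow> nat" where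
  "xy_deg \<mu> = Poly_Mapping.lookup \<mu> 0 + Poly_Mapping.lookup \<mu> 1"

interpretation xy_deg: additive_weight xy_deg
  by unfold_locales (simp add: xy_deg_def lookup_add)

definition XY_monomials :: "nat \<Rightarrow> (nat \<Rightarrow>\<^sub>0 nat) set" where
  "XY_monomials k = {monXY (k - i) i |i. i \<le> k}"

lemma finite_XY_monomials: "finite (XY_monomials k)"
proof -
  have "XY_monomials k = (\<lambda>i. monXY (k - i) i) ` {..k}" unfolding XY_monomials_def by auto
  then show ?thesis by simp
qed

lemma XY_monomials_tdeg: "\<mu> \<in> XY_monomials k \<Longrightarrow> tdeg \<mu> = k"
  unfolding XY_monomials_def by (auto simp: tdeg_monXY)

lemma XY_monomials_obtain:
  assumes "\<mu> \<in> XY_monomials k"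
  obtains i where "i \<le> k" "\<mu> = monXY (k - i) i"
  using assms unfolding XY_monomials_def by blast

lemma XY_monomials_lookup:
  "\<mu> \<in> XY_monomials k \<Longrightarrow> Poly_Mapping.lookup \<mu> 1 \<le> k \<and> \<mu> = monXY (k - Poly_Mapping.lookup \<mu> 1) (Poly_Mapping.lookup \<mu> 1)"
  unfolding XY_monomials_def by (auto simp: lookup_monXY)

lemma XY_monomials_le:
  assumes "\<mu> \<in> XY_monomials k" shows "\<mu> \<le> monXY k 0"
proof -
  obtain i where i: "i \<le> k" "\<mu> = monXY (k - i) i" using assms by (rule XY_monomials_obtain)
  show ?thesis
  proof (cases "i = 0")
    case False
    then have "lex_less \<mu> (monXY k 0)"
      unfolding lex_less_def using i by (intro exI[of _ 0]) (simp add: lookup_monXY)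
    then show ?thesis by (simp add: lex_less_iff)
  qed (use i in simp)
qed

lemma xy_deg_le_tdeg: "xy_deg \<mu> \<le> tdeg \<mu>"
  and xy_deg_eq_tdeg: "xy_deg \<mu> = tdeg \<mu> \<Longrightarrow> \<mu> \<in> XY_monomials (tdeg \<mu>)"
proof -
  let ?S = "Poly_Mapping.keys \<mu> \<union> {0, 1}"
  have "tdeg \<mu> = (\<Sum>v\<in>?S. Poly_Mapping.lookup \<mu> v)" by (rule tdeg_eq_sum_superset) auto
  also have "\<dots> = (\<Sum>v\<in>?S - {0, 1}. Poly_Mapping.lookup \<mu> v) + xy_deg \<mu>"
    by (subst sum.subset_diff[of "{0, 1}"]) (auto simp: xy_deg_def)
  finally have deg: "tdeg \<mu> = (\<Sum>v\<in>?S - {0, 1}. Poly_Mapping.lookup \<mu> v) + xy_deg \<mu>" .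
  then show "xy_deg \<mu> \<le> tdeg \<mu>" by simp
  assume "xy_deg \<mu> = tdeg \<mu>"
  then have "\<forall>v\<in>?S - {0, 1}. Poly_Mapping.lookup \<mu> v = 0" using deg by simp
  then have "\<mu> = monXY (Poly_Mapping.lookup \<mu> 0) (Poly_Mapping.lookup \<mu> 1)"
    by (intro poly_mapping_eqI) (auto simp: lookup_monXY in_keys_iff)
  moreover have "tdeg \<mu> - Poly_Mapping.lookup \<mu> 1 = Poly_Mapping.lookup \<mu> 0"
    using \<open>xy_deg \<mu> = tdeg \<mu>\<close> by (simp add: xy_deg_def)
  ultimately show "\<mu> \<in> XY_monomials (tdeg \<mu>)"
    unfolding XY_monomials_def using \<open>xy_deg \<mu> = tdeg \<mu>\<close>
    by (intro CollectI exI[of _ "Poly_Mapping.lookup \<mu> 1"]) (simp add: xy_deg_def)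
qed

text \<open>Compare the parts of least \<open>X, Y\<close>-degree of the two factors.\<close>

lemma xy_deg_factor:
  fixes v w :: "'k::field mpoly"
  assumes v: "\<forall>\<mu>\<in>Poly_Mapping.keys v. tdeg \<mu> = s" and w: "\<forall>\<mu>\<in>Poly_Mapping.keys w. tdeg \<mu> = t"
    and "w \<noteq> 0" and vw: "\<forall>\<mu>\<in>Poly_Mapping.keys (v * w). xy_deg \<mu> = s + t"
  shows "\<forall>\<mu>\<in>Poly_Mapping.keys v. xy_deg \<mu> = s"
proof (cases "v = 0")
  case False
  define a b where "a = Min (xy_deg ` Poly_Mapping.keys v)" and "b = Min (xy_deg ` Poly_Mapping.keys w)"
  have a: "\<forall>\<mu>\<in>Poly_Mapping.keys v. a \<le> xy_deg \<mu>" and b: "\<forall>\<mu>\<in>Poly_Mapping.keys w. b \<le> xy_deg \<mu>"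
    unfolding a_def b_def by simp_all
  obtain \<mu>a where \<mu>a: "\<mu>a \<in> Poly_Mapping.keys v" "xy_deg \<mu>a = a"
    using Min_in[of "xy_deg ` Poly_Mapping.keys v"] False unfolding a_def by fastforce
  obtain \<mu>b where \<mu>b: "\<mu>b \<in> Poly_Mapping.keys w" "xy_deg \<mu>b = b"
    using Min_in[of "xy_deg ` Poly_Mapping.keys w"] \<open>w \<noteq> 0\<close> unfolding b_def by fastforce
  have "restrict_keys (\<lambda>\<mu>. xy_deg \<mu> = a) v \<noteq> 0" "restrict_keys (\<lambda>\<mu>. xy_deg \<mu> = b) w \<noteq> 0"
    using \<mu>a \<mu>b by (auto simp: keys_restrict_keys simp flip: keys_eq_empty)
  then have "restrict_keys (\<lambda>\<mu>. xy_deg \<mu> = a + b) (v * w) \<noteq> 0"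
    unfolding xy_deg.restrict_weight_mult[OF a b] by (rule init_mon_mult(1))
  then obtain \<mu> where "\<mu> \<in> Poly_Mapping.keys (v * w)" "xy_deg \<mu> = a + b"
    by (auto simp: keys_restrict_keys simp flip: keys_eq_empty)
  then have "a + b = s + t" using vw by auto
  moreover have "a \<le> s" "b \<le> t" using \<mu>a \<mu>b v w xy_deg_le_tdeg by fastforce+
  ultimately have "a = s" by simp
  then show ?thesis using a v xy_deg_le_tdeg by (metis le_antisym)
qed simp

section \<open>A factorization of the monomial ideal\<close>

locale factorization =
  fixes D :: "'k::field set" and N m :: nat and \<N> :: "(nat \<Rightarrow>\<^sub>0 nat) set" and A B :: "'k mpoly set"
  assumes D: "is_subring D" and N: "N \<ge> 2" and \<N>: "\<N> \<subseteq> XY_monomials m"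
    and A: "A \<in> nz_ideals D N" "A \<noteq> PolyR D N"
    and B: "B \<in> nz_ideals D N" "B \<noteq> PolyR D N"
    and I_eq_mult: "ideal_gen D N (mpoly_of_mon ` ({monXY m 0, monXY 0 m} \<union> \<N>)) = ideal_mult D N A B"
begin

abbreviation gens where "gens \<equiv> {monXY m 0, monXY 0 m} \<union> \<N>"
abbreviation I where "I \<equiv> ideal_gen D N (mpoly_of_mon ` gens)"
abbreviation d where "d \<equiv> mdeg_ideal A"
abbreviation e where "e \<equiv> mdeg_ideal B"
abbreviation VA where "VA \<equiv> compK A d"
abbreviation VB where "VB \<equiv> compK B e"

lemma flip: "factorization D N m \<N> B A"
proof
  show "ideal_gen D N (mpoly_of_mon ` gens) = ideal_mult D N B A"
    using I_eq_mult by (simp add: ideal_mult_commute)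
qed (use D N \<N> A B in auto)

lemma gens_XY_monomials: "gens \<subseteq> XY_monomials m"
  using \<N> unfolding XY_monomials_def by (auto intro: exI[of _ 0] exI[of _ m])

lemma tdeg_gens: "g \<in> gens \<Longrightarrow> tdeg g = m"
  using gens_XY_monomials XY_monomials_tdeg by blast

lemma I_eq_mon_divisible: "I = {h \<in> PolyR D N. \<forall>\<mu>\<in>Poly_Mapping.keys h. mon_divisible gens \<mu>}"
proof (rule ideal_gen_monomials[OF D])
  fix g assume "g \<in> gens"
  then obtain i where "g = monXY (m - i) i"
    using gens_XY_monomials by (blast elim: XY_monomials_obtain)
  then show "vars_below N g" using vars_below_monXY[OF N] by simp
qed

lemma is_ideal_I: "is_ideal D N I"
  unfolding I_eq_mon_divisible by (rule is_ideal_mon_divisible[OF D])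

lemma mon_in_I: "g \<in> gens \<Longrightarrow> mpoly_of_mon g \<in> I"
  using ideal_gen_superset[of "mpoly_of_mon ` gens" D N] by blast

lemma I_nz_ideal: "I \<in> nz_ideals D N"
  using is_ideal_I mon_in_I[of "monXY m 0"] mpoly_of_mon_nonzero unfolding nz_ideals_def by blast

lemma mult_in_I: "a \<in> A \<Longrightarrow> b \<in> B \<Longrightarrow> a * b \<in> I"
  unfolding I_eq_mult by (rule mult_mem_ideal_mult)

lemma tdeg_keys_I: "h \<in> I \<Longrightarrow> \<mu> \<in> Poly_Mapping.keys h \<Longrightarrow> m \<le> tdeg \<mu>"
  using mon_divisible_homogeneous(1)[OF tdeg_gens] unfolding I_eq_mon_divisible by blast

lemma keys_compK_I: "f \<in> compK I m \<Longrightarrow> \<forall>\<mu>\<in>Poly_Mapping.keys f. \<mu> \<in> gens"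
  unfolding compK_eq_span
proof (rule keys_span_pred)
  fix v \<mu> assume "v \<in> hcomp m ` I" "\<mu> \<in> Poly_Mapping.keys v"
  then obtain h where "h \<in> I" "\<mu> \<in> Poly_Mapping.keys h" "tdeg \<mu> = m" by (auto simp: keys_hcomp)
  then show "\<mu> \<in> gens"
    using mon_divisible_homogeneous(2)[OF tdeg_gens] unfolding I_eq_mon_divisible by blast
qed

lemma mon_in_compK_I: assumes "g \<in> gens" shows "mpoly_of_mon g \<in> compK I m"
proof -
  have "hcomp m (mpoly_of_mon g) = (mpoly_of_mon g :: 'k mpoly)"
    unfolding hcomp_eq_restrict_keys by (rule restrict_keys_id) (simp add: mpoly_of_mon_def tdeg_gens[OF assms])
  then show ?thesis
    unfolding compK_eq_span using mon_in_I[OF assms] by (metis K.span_base image_eqI)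
qed

lemma is_ideal_A: "is_ideal D N A" and is_ideal_B: "is_ideal D N B"
  using A B unfolding nz_ideals_def by auto

lemma hcomp_mult_AB: "a \<in> A \<Longrightarrow> b \<in> B \<Longrightarrow> hcomp (d + e) (a * b) = hcomp d a * hcomp e b"
  by (intro hcomp_mult) (auto intro: mdeg_ideal_le_tdeg)

lemma hcomp_in_VA: "a \<in> A \<Longrightarrow> hcomp d a \<in> VA" and hcomp_in_VB: "b \<in> B \<Longrightarrow> hcomp e b \<in> VB"
  unfolding compK_eq_span by (auto intro: K.span_base)

text \<open>The elements with this property form an ideal, and it contains the products \<open>a b\<close>.\<close>

lemma lowest_part_I:
  assumes "h \<in> I"
  shows "\<forall>\<mu>\<in>Poly_Mapping.keys h. d + e \<le> tdeg \<mu>" and "hcomp (d + e) h \<in> spprod VA VB"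
proof -
  let ?S = "{h \<in> PolyR D N. (\<forall>\<mu>\<in>Poly_Mapping.keys h. d + e \<le> tdeg \<mu>) \<and> hcomp (d + e) h \<in> spprod VA VB}"
  have "I \<subseteq> ?S"
    unfolding I_eq_mult
  proof (rule ideal_mult_least[OF is_ideal_lowest_part_in[OF D]])
    show "K.subspace (spprod VA VB)" by (rule subspace_spprod)
    fix a b assume a: "a \<in> A" and b: "b \<in> B"
    have "a * b \<in> PolyR D N" using a b is_ideal_A is_ideal_B is_ideal_subset PolyR_mult[OF D] by blast
    moreover have "\<forall>\<mu>\<in>Poly_Mapping.keys (a * b). d + e \<le> tdeg \<mu>"
      using a b by (intro tdeg.keys_mult_weight_ge) (auto intro: mdeg_ideal_le_tdeg)
    moreover have "hcomp (d + e) (a * b) \<in> spprod VA VB"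
      unfolding hcomp_mult_AB[OF a b] spprod_eq_span using hcomp_in_VA[OF a] hcomp_in_VB[OF b]
      by (blast intro: K.span_base)
    ultimately show "a * b \<in> ?S" by blast
  qed
  then show "\<forall>\<mu>\<in>Poly_Mapping.keys h. d + e \<le> tdeg \<mu>" and "hcomp (d + e) h \<in> spprod VA VB"
    using assms by blast+
qed

lemma m_eq: "m = d + e"
proof (rule antisym)
  obtain a b where a: "a \<in> A" "hcomp d a \<noteq> 0" and b: "b \<in> B" "hcomp e b \<noteq> 0"
    using hcomp_mdeg_ideal_nonzero A(1) B(1) by metis
  have "hcomp (d + e) (a * b) \<noteq> 0"
    unfolding hcomp_mult_AB[OF a(1) b(1)] using init_mon_mult(1) a b by blast
  then obtain \<mu> where "\<mu> \<in> Poly_Mapping.keys (a * b)" "tdeg \<mu> = d + e"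
    by (auto simp: keys_hcomp simp flip: keys_eq_empty)
  then show "m \<le> d + e" using tdeg_keys_I[OF mult_in_I[OF a(1) b(1)], of \<mu>] by simp
  have "d + e \<le> tdeg (monXY m 0)"
    using lowest_part_I(1)[OF mon_in_I[of "monXY m 0"]] by (simp add: mpoly_of_mon_def)
  then show "d + e \<le> m" by (simp add: tdeg_monXY)
qed

lemma compK_I_eq_spprod: "compK I m = spprod VA VB"
proof
  have "hcomp m ` I \<subseteq> spprod VA VB" using lowest_part_I(2) m_eq by auto
  then show "compK I m \<subseteq> spprod VA VB"
    unfolding compK_eq_span[of I m] by (rule K.span_minimal[OF _ subspace_spprod])
  have "v * w \<in> compK I m" if "v \<in> VA" "w \<in> VB" for v w
  proof (rule mult_mem_span_mult)
    show "K.subspace (compK I m)" by (rule subspace_compK)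
    fix v' w' assume "v' \<in> hcomp d ` A" "w' \<in> hcomp e ` B"
    then obtain a b where "a \<in> A" "b \<in> B" "v' * w' = hcomp m (a * b)"
      using hcomp_mult_AB m_eq by auto
    then show "v' * w' \<in> compK I m"
      using mult_in_I unfolding compK_eq_span by (auto intro: K.span_base)
  qed (use that in \<open>simp_all add: compK_eq_span\<close>)
  then show "spprod VA VB \<subseteq> compK I m"
    unfolding spprod_eq_span by (intro K.span_minimal) (auto simp: compK_eq_span)
qed

lemma B_subset_I_if_d_eq_0:
  assumes "d = 0" shows "B \<subseteq> I"
proof
  obtain a where a: "a \<in> A" "hcomp 0 a \<noteq> 0" using hcomp_mdeg_ideal_nonzero A(1) assms by metis
  then have "Poly_Mapping.lookup a 0 \<noteq> 0" by (metis hcomp_0_eq_const single_zero)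
  fix b assume b: "b \<in> B"
  then have "\<forall>\<mu>\<in>Poly_Mapping.keys (a * b). mon_divisible gens \<mu>"
    using mult_in_I[OF a(1) b] unfolding I_eq_mon_divisible by blast
  then have "\<forall>\<mu>\<in>Poly_Mapping.keys b. mon_divisible gens \<mu>"
    by (rule mon_divisible_cancel_unit[OF \<open>Poly_Mapping.lookup a 0 \<noteq> 0\<close>])
  then show "b \<in> I" unfolding I_eq_mon_divisible using b is_ideal_B is_ideal_subset by blast
qed

lemma d_pos:
  assumes BF: "ideals_BF D N" shows "1 \<le> d"
proof (rule ccontr)
  assume "\<not> 1 \<le> d"
  then have "B \<subseteq> I" using B_subset_I_if_d_eq_0 by simp
  have "ideal_mult D N A I = I"
  proof
    show "ideal_mult D N A I \<subseteq> I"
      using is_ideal_A is_ideal_subset is_ideal_mult_left[OF is_ideal_I] by (intro ideal_mult_least[OF is_ideal_I]) blast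
    have "is_ideal D N (ideal_mult D N A I)"
      using is_ideal_A is_ideal_I by (intro is_ideal_ideal_mult[OF D] is_ideal_subset)
    then have "ideal_mult D N A B \<subseteq> ideal_mult D N A I"
      by (rule ideal_mult_least) (use \<open>B \<subseteq> I\<close> mult_mem_ideal_mult in blast)
    then show "I \<subseteq> ideal_mult D N A I" using I_eq_mult by simp
  qed
  then show False using ideals_BF_mult_absorb[OF D BF A I_nz_ideal] by blast
qed

lemma VB_nonzero: obtains w where "w \<in> VB" "w \<noteq> 0"
  using hcomp_mdeg_ideal_nonzero[OF B(1)] hcomp_in_VB by metis

lemma mult_in_compK_I: "v \<in> VA \<Longrightarrow> w \<in> VB \<Longrightarrow> v * w \<in> compK I m"
  unfolding compK_I_eq_spprod spprod_eq_span by (blast intro: K.span_base)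

lemma keys_VA: assumes "v \<in> VA" shows "\<forall>\<mu>\<in>Poly_Mapping.keys v. \<mu> \<in> XY_monomials d"
proof -
  obtain w where w: "w \<in> VB" "w \<noteq> 0" by (rule VB_nonzero)
  have "\<forall>\<mu>\<in>Poly_Mapping.keys (v * w). xy_deg \<mu> = d + e"
  proof
    fix \<mu> assume "\<mu> \<in> Poly_Mapping.keys (v * w)"
    then obtain i where "\<mu> = monXY (m - i) i" "i \<le> m"
      using keys_compK_I[OF mult_in_compK_I[OF assms w(1)]] gens_XY_monomials
      by (blast elim: XY_monomials_obtain)
    then show "xy_deg \<mu> = d + e" using m_eq by (simp add: xy_deg_def lookup_monXY)
  qed
  then have "\<forall>\<mu>\<in>Poly_Mapping.keys v. xy_deg \<mu> = d"
    by (rule xy_deg_factor[OF keys_compK[OF assms] keys_compK[OF w(1)] w(2)])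
  then show ?thesis using keys_compK[OF assms] xy_deg_eq_tdeg by metis
qed

lemma keys_VB: "w \<in> VB \<Longrightarrow> \<forall>\<mu>\<in>Poly_Mapping.keys w. \<mu> \<in> XY_monomials e"
proof -
  interpret flipped: factorization D N m \<N> B A by (rule flip)
  show "w \<in> VB \<Longrightarrow> \<forall>\<mu>\<in>Poly_Mapping.keys w. \<mu> \<in> XY_monomials e" by (rule flipped.keys_VA)
qed

lemma initial_X_power: "\<exists>v\<in>VA. v \<noteq> 0 \<and> init_mon v = monXY d 0"
proof (rule ccontr)
  assume no_X_power: "\<not> (\<exists>v\<in>VA. v \<noteq> 0 \<and> init_mon v = monXY d 0)"
  have lt: "\<mu> < monXY d 0" if v: "v \<in> VA" and \<mu>: "\<mu> \<in> Poly_Mapping.keys v" for v \<mu>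
  proof -
    have "v \<noteq> 0" using \<mu> by auto
    then have "init_mon v \<le> monXY d 0" "init_mon v \<noteq> monXY d 0"
      using keys_VA[OF v] init_mon_in_keys XY_monomials_le no_X_power v by blast+
    then show ?thesis using keys_le_init_mon[OF \<mu>] by simp
  qed
  have "spprod VA VB \<subseteq> {f. \<forall>\<mu>\<in>Poly_Mapping.keys f. \<mu> < monXY m 0}"
    unfolding spprod_eq_span
  proof (rule K.span_minimal[OF _ subspace_keys_pred], safe)
    fix v w \<mu> assume v: "v \<in> VA" and w: "w \<in> VB" and \<mu>: "\<mu> \<in> Poly_Mapping.keys (v * w)"
    then obtain p q where "\<mu> = p + q" "p \<in> Poly_Mapping.keys v" "q \<in> Poly_Mapping.keys w"
      using keys_mult[of v w] by blast
    then have "\<mu> < monXY d 0 + monXY e 0"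
      using lt[OF v] keys_VB[OF w] XY_monomials_le by (metis add_less_le_mono)
    then show "\<mu> < monXY m 0" using m_eq by (simp add: monXY_add)
  qed
  then show False
    using mon_in_compK_I[of "monXY m 0"] compK_I_eq_spprod by (auto simp: mpoly_of_mon_def)
qed

text \<open>Otherwise \<open>A\<^sub>K[d] = K f\<close>, and \<open>Y\<^sup>m\<close> would be a multiple of \<open>f\<close>, whose initial monomial
  is \<open>X\<^sup>d\<close> with \<open>d \<ge> 1\<close>.\<close>

lemma initial_not_X_power:
  assumes BF: "ideals_BF D N" shows "\<exists>v\<in>VA. v \<noteq> 0 \<and> init_mon v \<noteq> monXY d 0"
proof (rule ccontr)
  assume only_X_power: "\<not> (\<exists>v\<in>VA. v \<noteq> 0 \<and> init_mon v \<noteq> monXY d 0)"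
  obtain f where f: "f \<in> VA" "f \<noteq> 0" "init_mon f = monXY d 0" using initial_X_power by blast
  have multiple: "\<exists>c. v = smul c f" if "v \<in> VA" for v
    using smul_of_same_init_mon[OF subspace_compK f(1,2) _ that] only_X_power f(3) by metis
  have "spprod VA VB \<subseteq> (\<lambda>w. f * w) ` VB"
    unfolding spprod_eq_span
  proof (rule K.span_minimal)
    show "K.subspace ((\<lambda>w. f * w) ` VB)"
      by (rule module_hom.subspace_image[OF module_hom_mult_left]) (rule subspace_compK)
    have "v * w \<in> (\<lambda>w. f * w) ` VB" if vw: "v \<in> VA" "w \<in> VB" for v w
    proof -
      obtain c where "v = smul c f" using multiple vw(1) by blast
      then have "v * w = f * smul c w" by (simp add: smul_eq_single_mult mult.left_commute)
      moreover have "smul c w \<in> VB" using vw(2) by (simp add: compK_eq_span K.span_scale)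
      ultimately show ?thesis by blast
    qed
    then show "{v * w |v w. v \<in> VA \<and> w \<in> VB} \<subseteq> (\<lambda>w. f * w) ` VB" by blast
  qed
  then obtain w where eq: "mpoly_of_mon (monXY 0 m) = f * w"
    using mon_in_compK_I[of "monXY 0 m"] compK_I_eq_spprod by auto
  then have "w \<noteq> 0" using mpoly_of_mon_nonzero by force
  then have "init_mon (f * w) = monXY d 0 + init_mon w" using init_mon_mult(2)[OF f(2)] f(3) by simp
  then have "monXY 0 m = monXY d 0 + init_mon w" by (simp add: eq[symmetric] init_mon_mpoly_of_mon)
  then have "Poly_Mapping.lookup (monXY 0 m) 0 = d + Poly_Mapping.lookup (init_mon w) 0"
    by (simp add: lookup_add lookup_monXY)
  then show False using d_pos[OF BF] by (simp add: lookup_monXY)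
qed

lemma init_mon_VA: "v \<in> VA \<Longrightarrow> v \<noteq> 0 \<Longrightarrow> init_mon v \<in> XY_monomials d"
  using keys_VA init_mon_in_keys by blast

lemma init_mons_VA:
  assumes BF: "ideals_BF D N" shows "{monXY d 0} \<subset> init_mon ` (VA - {0})"
proof -
  obtain u where "u \<in> VA" "u \<noteq> 0" "init_mon u = monXY d 0" using initial_X_power by blast
  then have "monXY d 0 \<in> init_mon ` (VA - {0})" by (intro rev_image_eqI[of u]) auto
  moreover obtain v where "v \<in> VA" "v \<noteq> 0" "init_mon v \<noteq> monXY d 0"
    using initial_not_X_power[OF BF] by blast
  ultimately show ?thesis by blast
qed

lemma echelon_basis_VA:
  assumes BF: "ideals_BF D N"
  obtains fs a where "is_basisK VA fs" "length fs = dimK VA" "2 \<le> length fs" "0 \<notin> set fs"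
    "init_mon (fs ! 0) = monXY d 0"
    "\<forall>j. j + 1 < length fs \<longrightarrow> init_mon (fs ! (j + 1)) < init_mon (fs ! j)"
    "a 0 = 0" "\<forall>j<length fs. a j \<le> d \<and> init_mon (fs ! j) = monXY (d - a j) (a j)"
    "\<forall>j. 1 \<le> j \<and> j < length fs \<longrightarrow> 1 \<le> a j"
proof -
  obtain fs where basis: "is_basisK VA fs" and nz: "0 \<notin> set fs"
    and sorted: "sorted_wrt (\<lambda>f g. init_mon g < init_mon f) fs"
    and inits: "init_mon ` set fs = init_mon ` (VA - {0})"
    using echelon_basis[OF subspace_compK finite_XY_monomials] keys_VA by blast
  have decreasing: "init_mon (fs ! k) < init_mon (fs ! j)" if "j < k" "k < length fs" for j k
    using sorted that by (simp add: sorted_wrt_iff_nth_less)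
  have XY: "init_mon (fs ! j) \<in> XY_monomials d" if "j < length fs" for j
  proof (rule init_mon_VA)
    show "fs ! j \<in> VA" "fs ! j \<noteq> 0" using basis nz nth_mem[OF that] unfolding is_basisK_def by auto
  qed
  have two: "{monXY d 0} \<subset> init_mon ` set fs"
    using init_mons_VA[OF BF] unfolding inits .
  then have "1 < card (init_mon ` set fs)" using psubset_card_mono[OF _ two] by simp
  also have "\<dots> \<le> length fs" using card_image_le[of "set fs" init_mon] card_length[of fs] by simp
  finally have "2 \<le> length fs" by simp
  have "monXY d 0 \<in> init_mon ` set fs" using two by blast
  then obtain k where k: "k < length fs" "init_mon (fs ! k) = monXY d 0"
    by (auto simp: in_set_conv_nth)
  have first: "init_mon (fs ! 0) = monXY d 0"
  proof (cases "k = 0")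
    case False
    then have "monXY d 0 < init_mon (fs ! 0)" using decreasing[of 0 k] k by simp
    moreover have "0 < length fs" using k(1) by linarith
    then have "init_mon (fs ! 0) \<le> monXY d 0" by (rule XY_monomials_le[OF XY])
    ultimately show ?thesis by simp
  qed (use k in simp)
  define a where "a j = Poly_Mapping.lookup (init_mon (fs ! j)) 1" for j
  show ?thesis
  proof
    show "is_basisK VA fs" "0 \<notin> set fs" "2 \<le> length fs" "init_mon (fs ! 0) = monXY d 0" by fact+
    show "length fs = dimK VA" using dimK_eq_length[OF basis] by simp
    show "\<forall>j. j + 1 < length fs \<longrightarrow> init_mon (fs ! (j + 1)) < init_mon (fs ! j)"
      using decreasing by simp
    show "a 0 = 0" unfolding a_def first by (simp add: lookup_monXY)
    show form: "\<forall>j<length fs. a j \<le> d \<and> init_mon (fs ! j) = monXY (d - a j) (a j)"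
      unfolding a_def using XY XY_monomials_lookup by blast
    show "\<forall>j. 1 \<le> j \<and> j < length fs \<longrightarrow> 1 \<le> a j"
    proof (intro allI impI)
      fix j assume j: "1 \<le> j \<and> j < length fs"
      then have "init_mon (fs ! j) \<noteq> monXY d 0" using decreasing[of 0 j] first by simp
      then have "a j \<noteq> 0" using form j by (cases "a j") auto
      then show "1 \<le> a j" by simp
    qed
  qed
qed

lemma init_mon_mult_in_gens:
  assumes "v \<in> VA" "w \<in> VB" "v \<noteq> 0" "w \<noteq> 0"
  shows "init_mon v + init_mon w \<in> gens"
  using keys_compK_I[OF mult_in_compK_I[OF assms(1,2)]] init_mon_in_keys init_mon_mult[OF assms(3,4)]
  by metis

end

theorem lemma3p1:
  fixes D :: "'k::field set" and N m :: nat
    and \<N> :: "(nat \<Rightarrow>\<^sub>0 nat) set" and A B :: "'k mpoly set"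
  assumes D: "has_quotient_field D"
    and N: "N \<ge> 2"
    and BF: "ideals_BF D N"
    and m: "m \<ge> 1"
    and \<N>: "\<N> \<subseteq> {monXY (m - i) i |i. i \<le> m}"
    and A: "A \<in> nz_ideals D N" "A \<noteq> PolyR D N"
    and B: "B \<in> nz_ideals D N" "B \<noteq> PolyR D N"
    and I: "ideal_gen D N (mpoly_of_mon ` ({monXY m 0, monXY 0 m} \<union> \<N>)) = ideal_mult D N A B"
  defines "d \<equiv> mdeg_ideal A" and "e \<equiv> mdeg_ideal B"
    and "r \<equiv> dimK (compK A (mdeg_ideal A))" and "s \<equiv> dimK (compK B (mdeg_ideal B))"
  shows "m = d + e
    \<and> compK (ideal_gen D N (mpoly_of_mon ` ({monXY m 0, monXY 0 m} \<union> \<N>))) m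
        = spprod (compK A d) (compK B e)
    \<and> d \<ge> 1 \<and> e \<ge> 1
    \<and> r \<ge> 2 \<and> s \<ge> 2
    \<and> (\<exists>fs gs a b.
          is_basisK (compK A d) fs \<and> length fs = r \<and>
          is_basisK (compK B e) gs \<and> length gs = s \<and>
          init_mon (fs ! 0) = monXY d 0 \<and>
          (\<forall>j. j + 1 < r \<longrightarrow> lex_less (init_mon (fs ! (j + 1))) (init_mon (fs ! j))) \<and>
          init_mon (gs ! 0) = monXY e 0 \<and>
          (\<forall>k. k + 1 < s \<longrightarrow> lex_less (init_mon (gs ! (k + 1))) (init_mon (gs ! k))) \<and>
          a 0 = 0 \<and> b 0 = 0 \<and>
          (\<forall>j. 1 \<le> j \<and> j < r \<longrightarrow> 1 \<le> a j \<and> a j \<le> d \<and> init_mon (fs ! j) = monXY (d - a j) (a j)) \<and>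
          (\<forall>k. 1 \<le> k \<and> k < s \<longrightarrow> 1 \<le> b k \<and> b k \<le> e \<and> init_mon (gs ! k) = monXY (e - b k) (b k)) \<and>
          (\<forall>j<r. \<forall>k<s. monXY (m - (a j + b k)) (a j + b k) \<in> {monXY m 0, monXY 0 m} \<union> \<N>))"
proof -
  have subring: "is_subring D" using D unfolding has_quotient_field_def by blast
  have \<N>_XY: "\<N> \<subseteq> XY_monomials m" using \<N> unfolding XY_monomials_def .
  interpret F: factorization D N m \<N> A B using subring N \<N>_XY A B I by (rule factorization.intro)
  interpret G: factorization D N m \<N> B A by (rule F.flip)
  obtain fs a where fs: "is_basisK F.VA fs" "length fs = dimK F.VA" "2 \<le> length fs" "0 \<notin> set fs"
    "init_mon (fs ! 0) = monXY F.d 0" "\<forall>j. j + 1 < length fs \<longrightarrow> init_mon (fs ! (j + 1)) < init_mon (fs ! j)"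
    "a 0 = 0" "\<forall>j<length fs. a j \<le> F.d \<and> init_mon (fs ! j) = monXY (F.d - a j) (a j)"
    "\<forall>j. 1 \<le> j \<and> j < length fs \<longrightarrow> 1 \<le> a j"
    by (rule F.echelon_basis_VA[OF BF])
  obtain gs b where gs: "is_basisK F.VB gs" "length gs = dimK F.VB" "2 \<le> length gs" "0 \<notin> set gs"
    "init_mon (gs ! 0) = monXY F.e 0" "\<forall>k. k + 1 < length gs \<longrightarrow> init_mon (gs ! (k + 1)) < init_mon (gs ! k)"
    "b 0 = 0" "\<forall>k<length gs. b k \<le> F.e \<and> init_mon (gs ! k) = monXY (F.e - b k) (b k)"
    "\<forall>k. 1 \<le> k \<and> k < length gs \<longrightarrow> 1 \<le> b k"
    by (rule G.echelon_basis_VA[OF BF])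
  have "monXY (m - (a j + b k)) (a j + b k) \<in> F.gens" if "j < length fs" "k < length gs" for j k
  proof -
    have "fs ! j \<in> F.VA" "gs ! k \<in> F.VB" "fs ! j \<noteq> 0" "gs ! k \<noteq> 0"
      using fs(1,4) gs(1,4) that nth_mem unfolding is_basisK_def by (metis subsetD)+
    then have "init_mon (fs ! j) + init_mon (gs ! k) \<in> F.gens" by (rule F.init_mon_mult_in_gens)
    then show ?thesis using fs(8) gs(8) that F.m_eq by (simp add: monXY_add)
  qed
  then show ?thesis
    unfolding d_def e_def r_def s_def lex_less_iff
    using F.m_eq F.compK_I_eq_spprod F.d_pos[OF BF] G.d_pos[OF BF] fs(1-3,5-9) gs(1-3,5-9)
    by (intro conjI exI[of _ fs] exI[of _ gs] exI[of _ a] exI[of _ b]) simp_all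
qed

end
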